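(* Let $p$ be a polynomial, $(c,\epsilon,\delta)$ a comonoid in $(\mathbf{Poly},\mathcal{y},\triangleleft)$, and $s$ a polynomial. Composing with $\pi\triangleleft s$, where $\pi\colon\mathfrak{c}_p\to p$ is the canonical projection, gives a bijection between $(\mathfrak{c}_p,c)$-effects handler structures $\Psi\colon s\triangleleft c\to\mathfrak{c}_p\triangleleft s$ on $s$ and elementary $(p,c)$-effects handler structures $\varphi\colon s\triangleleft c\to p\triangleleft s$ on $s$.
   Context: Polynomials $p=\sum_{I\in p(1)}\mathcal{y}^{p[I]}$ form $\mathbf{Poly}$ with composition $\triangleleft$ (unit $\mathcal{y}$, the polynomial with one position and one direction) and cartesian product $\times$. $\mathfrak{c}_p$ is the cofree comonoid on $p$: $\mathfrak{c}_p=\lim_i p^{(i)}$ where $p^{(0)}=\mathcal{y}$, $p^{(1+i)}=\mathcal{y}\times(p\triangleleft p^{(i)})$, with transition maps $\pi^{(0)}$ the projection and $\pi^{(1+i)}=\mathcal{y}\times(p\triangleleft\pi^{(i)})$; it carries a comonoid structure with counit the projection to $p^{(0)}$, and $\pi\colon\mathfrak{c}_p\to p$ is the projection $\mathfrak{c}_p\to p^{(1)}=\mathcal{y}\times p\to p$. For comonoids $c,d$, a $(c,d)$-effects handler is a polynomial $s$ with a morphism $\varphi\colon s\triangleleft d\to c\triangleleft s$ such that $(\epsilon_c\triangleleft s)\circ\varphi=s\triangleleft\epsilon_d$ and $(\delta_c\triangleleft s)\circ\varphi=(c\triangleleft\varphi)\circ(\varphi\triangleleft d)\circ(s\triangleleft\delta_d)$.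 For polynomials $p,q$, an elementary $(p,q)$-effects handler is a polynomial $s$ with any morphism $s\triangleleft q\to p\triangleleft s$. *)

theory Defs
  imports "HOL-Library.FuncSet"
begin

text \<open>Polynomials p = sum over positions I in p(1) of y^(p[I]), represented by a set of
positions and a family of direction sets.\<close>

type_synonym ('i,'d) poly = "'i set \<times> ('i \<Rightarrow> 'd set)"

definition ppos :: "('i,'d) poly \<Rightarrow> 'i set" where "ppos p = fst p"
definition pdir :: "('i,'d) poly \<Rightarrow> 'i \<Rightarrow> 'd set" where "pdir p = snd p"

text \<open>Morphisms are taken
extensional (undefined outside their domain), so that equality of morphisms is HOL equality.\<close>

definition is_hom :: "('i,'d) poly \<Rightarrow> ('j,'e) poly \<Rightarrow> ('i \<Rightarrow> 'j) \<times> ('i \<Rightarrow> 'e \<Rightarrow> 'd) \<Rightarrow> bool" where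
  "is_hom p q f \<longleftrightarrow>
     (\<forall>I\<in>ppos p. fst f I \<in> ppos q \<and> (\<forall>e\<in>pdir q (fst f I). snd f I e \<in> pdir p I))
   \<and> (\<forall>I. I \<notin> ppos p \<longrightarrow> fst f I = undefined)
   \<and> (\<forall>I e. (I \<notin> ppos p \<or> e \<notin> pdir q (fst f I)) \<longrightarrow> snd f I e = undefined)"

definition restrict_hom :: "('i,'d) poly \<Rightarrow> ('j,'e) poly \<Rightarrow> ('i \<Rightarrow> 'j) \<times> ('i \<Rightarrow> 'e \<Rightarrow> 'd)
    \<Rightarrow> ('i \<Rightarrow> 'j) \<times> ('i \<Rightarrow> 'e \<Rightarrow> 'd)" where
  "restrict_hom p q F =
     (\<lambda>I. if I \<in> ppos p then fst F I else undefined,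
      \<lambda>I e. if I \<in> ppos p \<and> e \<in> pdir q (fst F I) then snd F I e else undefined)"

definition ypoly :: "(unit, unit) poly" where "ypoly = ({()}, \<lambda>_. {()})"

definition tri :: "('i,'d) poly \<Rightarrow> ('j,'e) poly \<Rightarrow> ('i \<times> ('d \<Rightarrow> 'j), 'd \<times> 'e) poly" where
  "tri p q = ({(I, f). I \<in> ppos p \<and> f \<in> PiE (pdir p I) (\<lambda>_. ppos q)},
              \<lambda>(I, f). {(d, e). d \<in> pdir p I \<and> e \<in> pdir q (f d)})"

definition id_hom :: "('i,'d) poly \<Rightarrow> ('i \<Rightarrow> 'i) \<times> ('i \<Rightarrow> 'd \<Rightarrow> 'd)" where
  "id_hom p = restrict_hom p p (\<lambda>I. I, \<lambda>I e. e)"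

text \<open>comp_hom p r g f is g \<circ> f, for f : p -> q and g : q -> r.\<close>
definition comp_hom :: "('i,'d) poly \<Rightarrow> ('k,'g) poly \<Rightarrow> ('j \<Rightarrow> 'k) \<times> ('j \<Rightarrow> 'g \<Rightarrow> 'e)
    \<Rightarrow> ('i \<Rightarrow> 'j) \<times> ('i \<Rightarrow> 'e \<Rightarrow> 'd) \<Rightarrow> ('i \<Rightarrow> 'k) \<times> ('i \<Rightarrow> 'g \<Rightarrow> 'd)" where
  "comp_hom p r g f = restrict_hom p r (fst g \<circ> fst f, \<lambda>I e. snd f I (snd g (fst f I) e))"

definition tri_hom where
  "tri_hom p q p' q' f g = restrict_hom (tri p q) (tri p' q')
     (\<lambda>(I, h). (fst f I, restrict (\<lambda>d'. fst g (h (snd f I d'))) (pdir p' (fst f I))),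
      \<lambda>(I, h) (d', e'). (snd f I d', snd g (h (snd f I d')) e'))"

definition lunit_inv :: "('i,'d) poly \<Rightarrow> _" where
  "lunit_inv s = restrict_hom (tri ypoly s) s (\<lambda>(u, h). h (), \<lambda>_ e. ((), e))"

definition runit_inv :: "('i,'d) poly \<Rightarrow> _" where
  "runit_inv s = restrict_hom (tri s ypoly) s (\<lambda>(I, h). I, \<lambda>_ d. (d, ()))"

definition assoc where
  "assoc p q r = restrict_hom (tri p (tri q r)) (tri (tri p q) r)
     (\<lambda>(I, h). ((I, restrict (\<lambda>d. fst (h d)) (pdir p I)),
                restrict (\<lambda>x. snd (h (fst x)) (snd x))
                         (pdir (tri p q) (I, restrict (\<lambda>d. fst (h d)) (pdir p I)))),
      \<lambda>_ x. (fst (fst x), (snd (fst x), snd x)))"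

definition assoc_inv where
  "assoc_inv p q r = restrict_hom (tri (tri p q) r) (tri p (tri q r))
     (\<lambda>((I, g), h). (I, restrict (\<lambda>d. (g d, restrict (\<lambda>e. h (d, e)) (pdir q (g d)))) (pdir p I)),
      \<lambda>_ x. ((fst x, fst (snd x)), snd (snd x)))"

definition comonoid :: "('i,'d) poly \<Rightarrow> ('i \<Rightarrow> unit) \<times> ('i \<Rightarrow> unit \<Rightarrow> 'd)
    \<Rightarrow> ('i \<Rightarrow> 'i \<times> ('d \<Rightarrow> 'i)) \<times> ('i \<Rightarrow> 'd \<times> 'd \<Rightarrow> 'd) \<Rightarrow> bool" where
  "comonoid c eps delta \<longleftrightarrow>
     is_hom c ypoly eps \<and> is_hom c (tri c c) delta
   \<and> comp_hom c c (lunit_inv c)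
       (comp_hom c (tri ypoly c) (tri_hom c c ypoly c eps (id_hom c)) delta) = id_hom c
   \<and> comp_hom c c (runit_inv c)
       (comp_hom c (tri c ypoly) (tri_hom c c c ypoly (id_hom c) eps) delta) = id_hom c
   \<and> comp_hom c (tri (tri c c) c) (tri_hom c c (tri c c) c delta (id_hom c)) delta
     = comp_hom c (tri (tri c c) c) (assoc c c c)
         (comp_hom c (tri c (tri c c)) (tri_hom c c c (tri c c) (id_hom c) delta) delta)"

definition handler where
  "handler c epsc deltac d epsd deltad s phi \<longleftrightarrow>
     is_hom (tri s d) (tri c s) phi
   \<and> comp_hom (tri s d) s (lunit_inv s)
       (comp_hom (tri s d) (tri ypoly s) (tri_hom c s ypoly s epsc (id_hom s)) phi)
     = comp_hom (tri s d) s (runit_inv s) (tri_hom s d s ypoly (id_hom s) epsd)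
   \<and> comp_hom (tri s d) (tri (tri c c) s) (tri_hom c s (tri c c) s deltac (id_hom s)) phi
     = comp_hom (tri s d) (tri (tri c c) s) (assoc c c s)
        (comp_hom (tri s d) (tri c (tri c s)) (tri_hom c (tri s d) c (tri c s) (id_hom c) phi)
         (comp_hom (tri s d) (tri c (tri s d)) (assoc_inv c s d)
          (comp_hom (tri s d) (tri (tri c s) d) (tri_hom (tri s d) d (tri c s) d phi (id_hom d))
           (comp_hom (tri s d) (tri (tri s d) d) (assoc s d d)
             (tri_hom s d s (tri d d) (id_hom s) deltad)))))"

text \<open>Cofree comonoid c_p: positions are p-trees (possibly infinite), encoded as functions from
finite paths of directions to positions (undefined off the tree); directions at a tree are
its finite rooted paths.  This is the explicit form of lim_i p^(i).\<close>
definition tpaths :: "('i,'d) poly \<Rightarrow> ('d list \<Rightarrow> 'i) \<Rightarrow> 'd list set" where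
  "tpaths p t = {ds. \<forall>k < length ds. ds ! k \<in> pdir p (t (take k ds))}"

definition cofree :: "('i,'d) poly \<Rightarrow> ('d list \<Rightarrow> 'i, 'd list) poly" where
  "cofree p = ({t. (\<forall>ds \<in> tpaths p t. t ds \<in> ppos p) \<and> (\<forall>ds. ds \<notin> tpaths p t \<longrightarrow> t ds = undefined)},
               tpaths p)"

definition cofree_eps :: "('i,'d) poly \<Rightarrow> _" where
  "cofree_eps p = restrict_hom (cofree p) ypoly (\<lambda>_. (), \<lambda>_ _. [])"

definition cofree_delta :: "('i,'d) poly \<Rightarrow> _" where
  "cofree_delta p = restrict_hom (cofree p) (tri (cofree p) (cofree p))
     (\<lambda>t. (t, restrict (\<lambda>ds es. t (ds @ es)) (tpaths p t)), \<lambda>_ x. fst x @ snd x)"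

definition cofree_proj :: "('i,'d) poly \<Rightarrow> _" where
  "cofree_proj p = restrict_hom (cofree p) p (\<lambda>t. t [], \<lambda>_ d. [d])"

end

theory Submission
  imports Defs
begin

text \<open>Comonoids in (Poly, y, \<triangleleft>) are categories, so a position of s \<triangleleft> c is an s-position
whose directions are decorated by objects of c, and directions there can be pulled back along
morphisms of c.  A morphism \<Psi> : s \<triangleleft> c \<rightarrow> c_p \<triangleleft> s assigns to such a position a p-tree
and, to every path ds of the tree, an s-position together with a backward map.  The counit law
of a handler says that the data at the empty path is trivial; the comultiplication law says that
the data along ds @ es is the data along es at the position reached along ds.  Hence a handler
is determined by its data along paths of length one, which is exactly (\<pi> \<triangleleft> s) \<circ> \<Psi>.
Conversely, an elementary handler \<phi> extends to a handler by running it along paths, and the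
comonoid laws of c make the run compatible with concatenation of paths.\<close>

section \<open>Polynomials and their morphisms\<close>

lemma ppos_pair [simp]: "ppos (A, B) = A"
  by (simp add: ppos_def)

lemma pdir_pair [simp]: "pdir (A, B) = B"
  by (simp add: pdir_def)

lemma mem_ppos_tri [simp]:
  "(I, f) \<in> ppos (tri p q) \<longleftrightarrow> I \<in> ppos p \<and> f \<in> PiE (pdir p I) (\<lambda>_. ppos q)"
  by (simp add: tri_def)

lemma mem_pdir_tri [simp]: "(d, e) \<in> pdir (tri p q) (I, f) \<longleftrightarrow> d \<in> pdir p I \<and> e \<in> pdir q (f d)"
  by (simp add: tri_def)

lemma ppos_tri_iff: "x \<in> ppos (tri p q) \<longleftrightarrow> fst x \<in> ppos p \<and> snd x \<in> PiE (pdir p (fst x)) (\<lambda>_. ppos q)"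
  by (cases x) simp

lemma pdir_tri_iff: "b \<in> pdir (tri p q) x \<longleftrightarrow> fst b \<in> pdir p (fst x) \<and> snd b \<in> pdir q (snd x (fst b))"
  by (cases x, cases b) simp

lemma pdir_tri: "pdir (tri p q) (I, f) = {(d, e). d \<in> pdir p I \<and> e \<in> pdir q (f d)}"
  by (simp add: tri_def)

lemma ppos_ypoly [simp]: "ppos ypoly = {()}"
  by (simp add: ypoly_def)

lemma pdir_ypoly [simp]: "pdir ypoly u = {()}"
  by (simp add: ypoly_def)

lemma prod_cases_left3: obtains a b c where "x = ((a, b), c)"
  by (metis prod.exhaust)

lemma restrict_eq_iff: "restrict f A = restrict g A \<longleftrightarrow> (\<forall>x\<in>A. f x = g x)"
  by (metis restrict_apply' restrict_ext)

lemma fst_restrict_hom: "I \<in> ppos p \<Longrightarrow> fst (restrict_hom p q F) I = fst F I"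
  by (simp add: restrict_hom_def)

lemma snd_restrict_hom:
  "I \<in> ppos p \<Longrightarrow> e \<in> pdir q (fst F I) \<Longrightarrow> snd (restrict_hom p q F) I e = snd F I e"
  by (simp add: restrict_hom_def)

lemma is_hom_restrict_hom:
  assumes "\<And>I. I \<in> ppos p \<Longrightarrow> fst F I \<in> ppos q"
    and "\<And>I e. I \<in> ppos p \<Longrightarrow> e \<in> pdir q (fst F I) \<Longrightarrow> snd F I e \<in> pdir p I"
  shows "is_hom p q (restrict_hom p q F)"
  using assms by (auto simp: is_hom_def restrict_hom_def)

lemma is_hom_pos: "is_hom p q f \<Longrightarrow> I \<in> ppos p \<Longrightarrow> fst f I \<in> ppos q"
  by (simp add: is_hom_def)

lemma is_hom_dir:
  "is_hom p q f \<Longrightarrow> I \<in> ppos p \<Longrightarrow> e \<in> pdir q (fst f I) \<Longrightarrow> snd f I e \<in> pdir p I"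
  by (simp add: is_hom_def)

lemma restrict_hom_eq_iff:
  "restrict_hom p q F = restrict_hom p q G \<longleftrightarrow>
   (\<forall>I\<in>ppos p. fst F I = fst G I \<and> (\<forall>e\<in>pdir q (fst F I). snd F I e = snd G I e))"
proof
  assume eq: "restrict_hom p q F = restrict_hom p q G"
  show "\<forall>I\<in>ppos p. fst F I = fst G I \<and> (\<forall>e\<in>pdir q (fst F I). snd F I e = snd G I e)"
  proof (intro ballI conjI)
    fix I assume I: "I \<in> ppos p"
    show fst_eq: "fst F I = fst G I"
      using arg_cong[OF eq, of "\<lambda>h. fst h I"] I by (simp add: restrict_hom_def)
    fix e assume "e \<in> pdir q (fst F I)"
    then show "snd F I e = snd G I e"
      using arg_cong[OF eq, of "\<lambda>h. snd h I e"] I fst_eq by (simp add: restrict_hom_def)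
  qed
qed (auto simp: restrict_hom_def intro!: prod_eqI ext)

lemma restrict_hom_self: "is_hom p q f \<Longrightarrow> restrict_hom p q f = f"
  unfolding restrict_hom_def is_hom_def by (auto intro!: prod_eqI ext)

lemma hom_eq_iff:
  assumes "is_hom p q f" "is_hom p q g"
  shows "f = g \<longleftrightarrow>
    (\<forall>I\<in>ppos p. fst f I = fst g I \<and> (\<forall>e\<in>pdir q (fst f I). snd f I e = snd g I e))"
  using restrict_hom_eq_iff[of p q f g] by (simp add: restrict_hom_self[OF assms(1)] restrict_hom_self[OF assms(2)])

lemma hom_eqI:
  assumes "is_hom p q f" "is_hom p q g"
    and "\<And>I. I \<in> ppos p \<Longrightarrow> fst f I = fst g I"
    and "\<And>I e. I \<in> ppos p \<Longrightarrow> e \<in> pdir q (fst f I) \<Longrightarrow> snd f I e = snd g I e"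
  shows "f = g"
  using assms by (simp add: hom_eq_iff)

lemma comp_hom_fst: "I \<in> ppos p \<Longrightarrow> fst (comp_hom p r g f) I = fst g (fst f I)"
  by (simp add: comp_hom_def restrict_hom_def)

lemma comp_hom_snd:
  "I \<in> ppos p \<Longrightarrow> e \<in> pdir r (fst g (fst f I)) \<Longrightarrow>
   snd (comp_hom p r g f) I e = snd f I (snd g (fst f I) e)"
  by (simp add: comp_hom_def restrict_hom_def)

lemma comp_hom_snd_step:
  assumes f: "is_hom p q f" and g: "is_hom q r g" and I: "I \<in> ppos p"
    and e: "e \<in> pdir r (fst g (fst f I))" and ge: "snd g (fst f I) e = e'"
  shows "snd (comp_hom p r g f) I e = snd f I e'" and "e' \<in> pdir q (fst f I)"
  using comp_hom_snd[OF I e] ge is_hom_dir[OF g is_hom_pos[OF f I] e] by simp_all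

lemma is_hom_comp_hom: "is_hom p q f \<Longrightarrow> is_hom q r g \<Longrightarrow> is_hom p r (comp_hom p r g f)"
  unfolding comp_hom_def by (rule is_hom_restrict_hom) (auto dest: is_hom_pos is_hom_dir)

lemma comp_hom_eq_iff:
  "comp_hom p r g f = comp_hom p r g' f' \<longleftrightarrow>
   (\<forall>I\<in>ppos p. fst g (fst f I) = fst g' (fst f' I) \<and>
      (\<forall>e\<in>pdir r (fst g (fst f I)). snd f I (snd g (fst f I) e) = snd f' I (snd g' (fst f' I) e)))"
  unfolding comp_hom_def restrict_hom_eq_iff by simp

lemma is_hom_id_hom: "is_hom p p (id_hom p)"
  unfolding id_hom_def by (rule is_hom_restrict_hom) auto

lemma id_hom_fst: "I \<in> ppos p \<Longrightarrow> fst (id_hom p) I = I"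
  by (simp add: id_hom_def restrict_hom_def)

lemma id_hom_snd: "I \<in> ppos p \<Longrightarrow> e \<in> pdir p I \<Longrightarrow> snd (id_hom p) I e = e"
  by (simp add: id_hom_def restrict_hom_def)

lemma tri_hom_fst:
  "(I, h) \<in> ppos (tri p q) \<Longrightarrow> fst (tri_hom p q p' q' f g) (I, h) =
     (fst f I, restrict (\<lambda>d'. fst g (h (snd f I d'))) (pdir p' (fst f I)))"
  by (simp add: tri_hom_def restrict_hom_def del: mem_ppos_tri)

lemma tri_hom_snd:
  "(I, h) \<in> ppos (tri p q) \<Longrightarrow> d' \<in> pdir p' (fst f I) \<Longrightarrow> e' \<in> pdir q' (fst g (h (snd f I d'))) \<Longrightarrow>
   snd (tri_hom p q p' q' f g) (I, h) (d', e') = (snd f I d', snd g (h (snd f I d')) e')"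
  by (simp add: tri_hom_def restrict_hom_def del: mem_ppos_tri)

lemma tri_hom_snd':
  assumes "(I, h) \<in> ppos (tri p q)"
    and "(d', e') \<in> pdir (tri p' q') (fst (tri_hom p q p' q' f g) (I, h))"
  shows "snd (tri_hom p q p' q' f g) (I, h) (d', e') = (snd f I d', snd g (h (snd f I d')) e')"
  using assms by (simp add: tri_hom_fst tri_hom_snd del: mem_ppos_tri split: if_splits)

lemma is_hom_tri_hom:
  assumes f: "is_hom p p' f" and g: "is_hom q q' g"
  shows "is_hom (tri p q) (tri p' q') (tri_hom p q p' q' f g)"
  unfolding tri_hom_def
proof (rule is_hom_restrict_hom, goal_cases)
  case (1 x)
  then show ?case using f g by (cases x) (auto dest: is_hom_pos is_hom_dir)
next
  case (2 x e)
  obtain I h where x: "x = (I, h)" by (cases x)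
  obtain d' e' where e: "e = (d', e')" by (cases e)
  have "snd f I d' \<in> pdir p I" and "h (snd f I d') \<in> ppos q"
    using 2 f by (auto simp: x e dest: is_hom_dir)
  then show ?case using 2 is_hom_dir[OF g] by (auto simp: x e)
qed

lemma is_hom_lunit_inv: "is_hom (tri ypoly s) s (lunit_inv s)"
  unfolding lunit_inv_def by (rule is_hom_restrict_hom) auto

lemma lunit_inv_fst: "(u, h) \<in> ppos (tri ypoly s) \<Longrightarrow> fst (lunit_inv s) (u, h) = h ()"
  by (simp add: lunit_inv_def restrict_hom_def del: mem_ppos_tri)

lemma lunit_inv_snd:
  "(u, h) \<in> ppos (tri ypoly s) \<Longrightarrow> e \<in> pdir s (h ()) \<Longrightarrow> snd (lunit_inv s) (u, h) e = ((), e)"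
  by (simp add: lunit_inv_def restrict_hom_def del: mem_ppos_tri)

lemma is_hom_runit_inv: "is_hom (tri s ypoly) s (runit_inv s)"
  unfolding runit_inv_def by (rule is_hom_restrict_hom) auto

lemma runit_inv_fst: "(I, h) \<in> ppos (tri s ypoly) \<Longrightarrow> fst (runit_inv s) (I, h) = I"
  by (simp add: runit_inv_def restrict_hom_def del: mem_ppos_tri)

lemma runit_inv_snd:
  "(I, h) \<in> ppos (tri s ypoly) \<Longrightarrow> d \<in> pdir s I \<Longrightarrow> snd (runit_inv s) (I, h) d = (d, ())"
  by (simp add: runit_inv_def restrict_hom_def del: mem_ppos_tri)

lemma assoc_fst:
  "(I, h) \<in> ppos (tri p (tri q r)) \<Longrightarrow> fst (assoc p q r) (I, h) =
     ((I, restrict (\<lambda>d. fst (h d)) (pdir p I)),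
      restrict (\<lambda>x. snd (h (fst x)) (snd x)) (pdir (tri p q) (I, restrict (\<lambda>d. fst (h d)) (pdir p I))))"
  by (simp add: assoc_def restrict_hom_def del: mem_ppos_tri)

lemma assoc_snd:
  "(I, h) \<in> ppos (tri p (tri q r)) \<Longrightarrow> x \<in> pdir (tri (tri p q) r) (fst (assoc p q r) (I, h)) \<Longrightarrow>
   snd (assoc p q r) (I, h) x = (fst (fst x), (snd (fst x), snd x))"
  unfolding assoc_def by (subst snd_restrict_hom) (auto simp: fst_restrict_hom simp del: mem_ppos_tri)

lemma is_hom_assoc: "is_hom (tri p (tri q r)) (tri (tri p q) r) (assoc p q r)"
  unfolding assoc_def
proof (rule is_hom_restrict_hom, goal_cases)
  case (1 x)
  then obtain I h where x: "x = (I, h)" and I: "I \<in> ppos p"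
    and h: "h \<in> PiE (pdir p I) (\<lambda>_. ppos (tri q r))"
    by (cases x) auto
  have "fst (h d) \<in> ppos q \<and> (\<forall>e\<in>pdir q (fst (h d)). snd (h d) e \<in> ppos r)" if "d \<in> pdir p I" for d
  proof -
    have "h d \<in> ppos (tri q r)" using h that by auto
    then show ?thesis by (cases "h d") auto
  qed
  then show ?case using I by (auto simp: x pdir_tri)
next
  case (2 x e)
  then obtain I h where x: "x = (I, h)" by (cases x) auto
  obtain d e1 e2 where "e = ((d, e1), e2)" by (rule prod_cases_left3)
  then show ?case using 2 by (cases "h d") (auto simp: x)
qed

lemma assoc_inv_fst:
  "((I, g), h) \<in> ppos (tri (tri p q) r) \<Longrightarrow> fst (assoc_inv p q r) ((I, g), h) =
     (I, restrict (\<lambda>d. (g d, restrict (\<lambda>e. h (d, e)) (pdir q (g d)))) (pdir p I))"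
  by (simp add: assoc_inv_def restrict_hom_def del: mem_ppos_tri)

lemma assoc_inv_snd:
  "((I, g), h) \<in> ppos (tri (tri p q) r) \<Longrightarrow>
   x \<in> pdir (tri p (tri q r)) (fst (assoc_inv p q r) ((I, g), h)) \<Longrightarrow>
   snd (assoc_inv p q r) ((I, g), h) x = ((fst x, fst (snd x)), snd (snd x))"
  unfolding assoc_inv_def by (subst snd_restrict_hom) (auto simp: fst_restrict_hom simp del: mem_ppos_tri)

lemma is_hom_assoc_inv: "is_hom (tri (tri p q) r) (tri p (tri q r)) (assoc_inv p q r)"
  unfolding assoc_inv_def
proof (rule is_hom_restrict_hom, goal_cases)
  case (1 x)
  obtain I g h where x: "x = ((I, g), h)" by (rule prod_cases_left3)
  from 1 show ?case by (auto simp: x pdir_tri simp del: mem_pdir_tri)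
next
  case (2 x e)
  obtain I g h where x: "x = ((I, g), h)" by (rule prod_cases_left3)
  obtain d e1 e2 where "e = (d, e1, e2)" by (rule prod_cases3)
  with 2 show ?case by (auto simp: x)
qed

section \<open>The cofree comonoid\<close>

definition subtree :: "('d list \<Rightarrow> 'i) \<Rightarrow> 'd list \<Rightarrow> 'd list \<Rightarrow> 'i" where
  "subtree t ds = (\<lambda>es. t (ds @ es))"

lemma tpaths_Nil [simp]: "[] \<in> tpaths p t"
  by (simp add: tpaths_def)

lemma tpaths_Cons [simp]:
  "d # ds \<in> tpaths p t \<longleftrightarrow> d \<in> pdir p (t []) \<and> ds \<in> tpaths p (subtree t [d])"
  unfolding tpaths_def subtree_def by (auto simp: less_Suc_eq_0_disj)

lemma tpaths_append: "ds @ es \<in> tpaths p t \<longleftrightarrow> ds \<in> tpaths p t \<and> es \<in> tpaths p (subtree t ds)"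
  by (induction ds arbitrary: t) (simp_all add: subtree_def)

lemma mem_ppos_cofree:
  "t \<in> ppos (cofree p) \<longleftrightarrow>
   (\<forall>ds \<in> tpaths p t. t ds \<in> ppos p) \<and> (\<forall>ds. ds \<notin> tpaths p t \<longrightarrow> t ds = undefined)"
  by (simp add: cofree_def)

lemma pdir_cofree [simp]: "pdir (cofree p) t = tpaths p t"
  by (simp add: cofree_def)

lemma subtree_mem_ppos_cofree:
  "t \<in> ppos (cofree p) \<Longrightarrow> ds \<in> tpaths p t \<Longrightarrow> subtree t ds \<in> ppos (cofree p)"
  unfolding mem_ppos_cofree by (auto simp: tpaths_append subtree_def)

lemma root_mem_ppos: "t \<in> ppos (cofree p) \<Longrightarrow> t [] \<in> ppos p"
  unfolding mem_ppos_cofree by auto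

lemma is_hom_cofree_eps: "is_hom (cofree p) ypoly (cofree_eps p)"
  unfolding cofree_eps_def by (rule is_hom_restrict_hom) auto

lemma cofree_eps_fst: "t \<in> ppos (cofree p) \<Longrightarrow> fst (cofree_eps p) t = ()"
  by (simp add: cofree_eps_def restrict_hom_def)

lemma cofree_eps_snd: "t \<in> ppos (cofree p) \<Longrightarrow> snd (cofree_eps p) t u = []"
  by (simp add: cofree_eps_def restrict_hom_def)

lemma is_hom_cofree_delta: "is_hom (cofree p) (tri (cofree p) (cofree p)) (cofree_delta p)"
  unfolding cofree_delta_def
  by (rule is_hom_restrict_hom)
     (auto simp: tpaths_append subtree_mem_ppos_cofree[unfolded subtree_def] subtree_def)

lemma cofree_delta_fst:
  "t \<in> ppos (cofree p) \<Longrightarrow> fst (cofree_delta p) t = (t, restrict (subtree t) (tpaths p t))"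
  by (simp add: cofree_delta_def restrict_hom_def subtree_def cong: restrict_cong)

lemma cofree_delta_snd:
  "t \<in> ppos (cofree p) \<Longrightarrow> ds \<in> tpaths p t \<Longrightarrow> es \<in> tpaths p (subtree t ds) \<Longrightarrow>
   snd (cofree_delta p) t (ds, es) = ds @ es"
  by (simp add: cofree_delta_def restrict_hom_def subtree_def)

lemma is_hom_cofree_proj: "is_hom (cofree p) p (cofree_proj p)"
  unfolding cofree_proj_def by (rule is_hom_restrict_hom) (auto simp: root_mem_ppos)

lemma cofree_proj_fst: "t \<in> ppos (cofree p) \<Longrightarrow> fst (cofree_proj p) t = t []"
  by (simp add: cofree_proj_def restrict_hom_def)

lemma cofree_proj_snd: "t \<in> ppos (cofree p) \<Longrightarrow> d \<in> pdir p (t []) \<Longrightarrow> snd (cofree_proj p) t d = [d]"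
  by (simp add: cofree_proj_def restrict_hom_def)

section \<open>Comonoids as categories\<close>

text \<open>A comonoid structure on c makes its positions the objects and its directions at j the
morphisms out of j of a category: delta records codomains (delta_fst below) and composes, eps
picks identities.\<close>

locale poly_comonoid =
  fixes c :: "('j,'e) poly" and eps :: "('j \<Rightarrow> unit) \<times> ('j \<Rightarrow> unit \<Rightarrow> 'e)"
    and delta :: "('j \<Rightarrow> 'j \<times> ('e \<Rightarrow> 'j)) \<times> ('j \<Rightarrow> 'e \<times> 'e \<Rightarrow> 'e)"
  assumes comonoid: "comonoid c eps delta"
begin

definition cod :: "'j \<Rightarrow> 'e \<Rightarrow> 'j" where "cod j = snd (fst delta j)"
definition ident :: "'j \<Rightarrow> 'e" where "ident j = snd eps j ()"
definition seq :: "'j \<Rightarrow> 'e \<Rightarrow> 'e \<Rightarrow> 'e" where "seq j e1 e2 = snd delta j (e1, e2)"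

lemma is_hom_eps: "is_hom c ypoly eps"
  using comonoid by (simp add: comonoid_def)

lemma is_hom_delta: "is_hom c (tri c c) delta"
  using comonoid by (simp add: comonoid_def)

lemma ident_mem: "j \<in> ppos c \<Longrightarrow> ident j \<in> pdir c j"
  using is_hom_dir[OF is_hom_eps, of j "()"] by (simp add: ident_def)

lemma delta_fst: assumes j: "j \<in> ppos c" shows "fst delta j = (j, cod j)"
proof -
  let ?T = "tri_hom c c c ypoly (id_hom c) eps"
  obtain j' h where dj: "fst delta j = (j', h)" by fastforce
  have mem: "(j', h) \<in> ppos (tri c c)" using is_hom_pos[OF is_hom_delta j] dj by simp
  have "fst ?T (j', h) \<in> ppos (tri c ypoly)"
    using is_hom_pos[OF is_hom_tri_hom[OF is_hom_id_hom is_hom_eps] mem] .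
  moreover have "fst ?T (j', h) = (j', restrict (\<lambda>d'. fst eps (h d')) (pdir c j'))"
    using mem by (simp add: tri_hom_fst id_hom_fst id_hom_snd cong: restrict_cong)
  moreover have "fst (comp_hom c c (runit_inv c) (comp_hom c (tri c ypoly) ?T delta)) j = fst (id_hom c) j"
    using comonoid by (simp add: comonoid_def)
  ultimately have "j' = j"
    using j by (simp add: comp_hom_fst id_hom_fst dj runit_inv_fst del: mem_ppos_tri)
  then show ?thesis using dj by (simp add: cod_def)
qed

lemma cod_PiE: "j \<in> ppos c \<Longrightarrow> cod j \<in> PiE (pdir c j) (\<lambda>_. ppos c)"
  using is_hom_pos[OF is_hom_delta, of j] delta_fst[of j] by simp

lemma cod_mem: "j \<in> ppos c \<Longrightarrow> e \<in> pdir c j \<Longrightarrow> cod j e \<in> ppos c"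
  using cod_PiE[of j] by auto

lemma delta_fst_mem: "j \<in> ppos c \<Longrightarrow> (j, cod j) \<in> ppos (tri c c)"
  using cod_PiE by simp

lemma seq_mem:
  "j \<in> ppos c \<Longrightarrow> e1 \<in> pdir c j \<Longrightarrow> e2 \<in> pdir c (cod j e1) \<Longrightarrow> seq j e1 e2 \<in> pdir c j"
  using is_hom_dir[OF is_hom_delta, of j "(e1, e2)"] delta_fst[of j] by (simp add: seq_def)

lemma
  assumes j: "j \<in> ppos c"
  shows cod_ident: "cod j (ident j) = j"
    and seq_ident_left: "\<And>e. e \<in> pdir c j \<Longrightarrow> seq j (ident j) e = e"
proof -
  let ?T = "tri_hom c c ypoly c eps (id_hom c)"
  let ?L = "comp_hom c c (lunit_inv c) (comp_hom c (tri ypoly c) ?T delta)"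
  have law: "?L = id_hom c" using comonoid by (simp add: comonoid_def)
  have mem: "(j, cod j) \<in> ppos (tri c c)" by (rule delta_fst_mem[OF j])
  have T_mem: "fst ?T (j, cod j) \<in> ppos (tri ypoly c)"
    by (rule is_hom_pos[OF is_hom_tri_hom[OF is_hom_eps is_hom_id_hom] mem])
  have T_fst: "fst ?T (j, cod j) = ((), restrict (\<lambda>_. cod j (ident j)) {()})"
    using mem j ident_mem[OF j] cod_mem[OF j]
    by (simp add: tri_hom_fst id_hom_fst ident_def del: mem_ppos_tri cong: restrict_cong)
  have "fst (lunit_inv c) (fst ?T (j, cod j)) = j"
    using arg_cong[OF law, of "\<lambda>F. fst F j"] j by (simp add: comp_hom_fst id_hom_fst delta_fst)
  then show cj: "cod j (ident j) = j" using T_mem T_fst by (simp add: lunit_inv_fst del: mem_ppos_tri)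
  fix e assume e: "e \<in> pdir c j"
  have "e = snd ?L j e"
    using arg_cong[OF law, of "\<lambda>F. snd F j e"] j e by (simp add: id_hom_snd)
  also have "\<dots> = snd delta j (snd ?T (j, cod j) ((), e))"
    using j e T_mem T_fst cj
    by (simp add: comp_hom_fst comp_hom_snd delta_fst lunit_inv_fst lunit_inv_snd del: mem_ppos_tri)
  also have "snd ?T (j, cod j) ((), e) = (ident j, e)"
    using mem e cj j ident_mem[OF j]
    by (subst tri_hom_snd) (simp_all add: id_hom_snd id_hom_fst ident_def del: mem_ppos_tri)
  finally show "seq j (ident j) e = e" by (simp add: seq_def)
qed

lemma seq_ident_right:
  assumes j: "j \<in> ppos c" and e: "e \<in> pdir c j"
  shows "seq j e (ident (cod j e)) = e"
proof -
  let ?T = "tri_hom c c c ypoly (id_hom c) eps"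
  let ?L = "comp_hom c c (runit_inv c) (comp_hom c (tri c ypoly) ?T delta)"
  have law: "?L = id_hom c" using comonoid by (simp add: comonoid_def)
  have mem: "(j, cod j) \<in> ppos (tri c c)" by (rule delta_fst_mem[OF j])
  have T_mem: "fst ?T (j, cod j) \<in> ppos (tri c ypoly)"
    by (rule is_hom_pos[OF is_hom_tri_hom[OF is_hom_id_hom is_hom_eps] mem])
  have T_fst: "fst ?T (j, cod j) = (j, restrict (\<lambda>_. ()) (pdir c j))"
    using mem j by (simp add: tri_hom_fst id_hom_fst id_hom_snd del: mem_ppos_tri cong: restrict_cong)
  have "e = snd ?L j e"
    using arg_cong[OF law, of "\<lambda>F. snd F j e"] j e by (simp add: id_hom_snd)
  also have "\<dots> = snd delta j (snd ?T (j, cod j) (e, ()))"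
    using j e T_mem T_fst
    by (simp add: comp_hom_fst comp_hom_snd delta_fst runit_inv_fst runit_inv_snd del: mem_ppos_tri)
  also have "snd ?T (j, cod j) (e, ()) = (e, ident (cod j e))"
    using mem e j by (subst tri_hom_snd) (simp_all add: id_hom_snd id_hom_fst ident_def del: mem_ppos_tri)
  finally show ?thesis by (simp add: seq_def)
qed

lemma delta_tri_id_fst:
  assumes j: "j \<in> ppos c"
  shows "fst (tri_hom c c (tri c c) c delta (id_hom c)) (j, cod j) =
    ((j, cod j), restrict (\<lambda>d. cod j (snd delta j d)) (pdir (tri c c) (j, cod j)))"
proof -
  have "cod j (snd delta j d) \<in> ppos c" if "d \<in> pdir (tri c c) (j, cod j)" for d
    using is_hom_dir[OF is_hom_delta j] delta_fst[OF j] cod_mem[OF j] that by auto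
  then show ?thesis
    using delta_fst_mem[OF j] j
    by (simp add: tri_hom_fst id_hom_fst delta_fst del: mem_ppos_tri cong: restrict_cong)
qed

lemma id_tri_delta_fst:
  assumes j: "j \<in> ppos c"
  shows "fst (tri_hom c c c (tri c c) (id_hom c) delta) (j, cod j) =
    (j, restrict (\<lambda>e. (cod j e, cod (cod j e))) (pdir c j))"
  using delta_fst_mem[OF j] j cod_mem[OF j]
  by (simp add: tri_hom_fst id_hom_fst id_hom_snd delta_fst del: mem_ppos_tri cong: restrict_cong)

lemma assoc_id_tri_delta_fst:
  assumes j: "j \<in> ppos c"
  shows "fst (assoc c c c) (fst (tri_hom c c c (tri c c) (id_hom c) delta) (j, cod j)) =
    ((j, cod j), restrict (\<lambda>x. cod (cod j (fst x)) (snd x)) (pdir (tri c c) (j, cod j)))"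
proof -
  have "fst (tri_hom c c c (tri c c) (id_hom c) delta) (j, cod j) \<in> ppos (tri c (tri c c))"
    by (rule is_hom_pos[OF is_hom_tri_hom[OF is_hom_id_hom is_hom_delta] delta_fst_mem[OF j]])
  moreover have "restrict (\<lambda>d. fst (restrict (\<lambda>e. (cod j e, cod (cod j e))) (pdir c j) d)) (pdir c j) = cod j"
    using cod_PiE[OF j] by (simp add: PiE_restrict cong: restrict_cong)
  ultimately show ?thesis
    unfolding id_tri_delta_fst[OF j]
    by (simp add: assoc_fst pdir_tri del: mem_ppos_tri cong: restrict_cong) (auto intro!: restrict_ext)
qed

lemma coassoc_at:
  assumes j: "j \<in> ppos c"
  shows "fst (tri_hom c c (tri c c) c delta (id_hom c)) (j, cod j) =
      fst (assoc c c c) (fst (tri_hom c c c (tri c c) (id_hom c) delta) (j, cod j))"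
    and "\<And>x. x \<in> pdir (tri (tri c c) c) (fst (tri_hom c c (tri c c) c delta (id_hom c)) (j, cod j)) \<Longrightarrow>
      snd delta j (snd (tri_hom c c (tri c c) c delta (id_hom c)) (j, cod j) x) =
      snd (comp_hom c (tri c (tri c c)) (tri_hom c c c (tri c c) (id_hom c) delta) delta) j
        (snd (assoc c c c) (fst (tri_hom c c c (tri c c) (id_hom c) delta) (j, cod j)) x)"
  using comonoid j unfolding comonoid_def comp_hom_eq_iff
  by (auto simp: comp_hom_fst delta_fst)

lemma cod_seq:
  assumes j: "j \<in> ppos c" and e1: "e1 \<in> pdir c j" and e2: "e2 \<in> pdir c (cod j e1)"
  shows "cod j (seq j e1 e2) = cod (cod j e1) e2"
proof -
  have "(e1, e2) \<in> pdir (tri c c) (j, cod j)" using e1 e2 by simp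
  then show ?thesis
    using coassoc_at(1)[OF j] unfolding delta_tri_id_fst[OF j] assoc_id_tri_delta_fst[OF j]
    by (simp add: seq_def restrict_eq_iff del: mem_pdir_tri)
qed

lemma seq_assoc:
  assumes j: "j \<in> ppos c" and e1: "e1 \<in> pdir c j" and e2: "e2 \<in> pdir c (cod j e1)"
    and e3: "e3 \<in> pdir c (cod (cod j e1) e2)"
  shows "seq j (seq j e1 e2) e3 = seq j e1 (seq (cod j e1) e2 e3)"
proof -
  let ?A = "tri_hom c c (tri c c) c delta (id_hom c)"
  let ?B = "tri_hom c c c (tri c c) (id_hom c) delta"
  have x_mem: "((e1, e2), e3) \<in> pdir (tri (tri c c) c) (fst ?A (j, cod j))"
    using e1 e2 e3 cod_seq[OF j e1 e2] by (simp add: delta_tri_id_fst[OF j] seq_def)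
  have "snd ?A (j, cod j) ((e1, e2), e3) = (seq j e1 e2, e3)"
    using delta_fst_mem[OF j] e1 e2 e3 cod_seq[OF j e1 e2] j
    by (subst tri_hom_snd) (simp_all add: id_hom_snd id_hom_fst delta_fst seq_def cod_mem seq_mem del: mem_ppos_tri)
  moreover have "snd (assoc c c c) (fst ?B (j, cod j)) ((e1, e2), e3) = (e1, (e2, e3))"
    using is_hom_pos[OF is_hom_tri_hom[OF is_hom_id_hom is_hom_delta] delta_fst_mem[OF j]]
      x_mem coassoc_at(1)[OF j]
    unfolding id_tri_delta_fst[OF j] by (subst assoc_snd) simp_all
  moreover have "snd (comp_hom c (tri c (tri c c)) ?B delta) j (e1, (e2, e3)) = seq j e1 (seq (cod j e1) e2 e3)"
    using delta_fst_mem[OF j] e1 e2 e3 j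
    by (simp add: comp_hom_snd delta_fst id_tri_delta_fst, subst tri_hom_snd)
       (simp_all add: id_hom_snd id_hom_fst delta_fst seq_def cod_mem del: mem_ppos_tri)
  ultimately show ?thesis
    using coassoc_at(2)[OF j x_mem] by (simp add: seq_def)
qed

text \<open>A move (J, \<beta>) from a position x of s \<triangleleft> c, with \<beta> sending the directions of s at J to
directions of s \<triangleleft> c at x, leads to the position advance s x J \<beta>, whose direction a is decorated
by the codomain of the morphism \<beta> a; pullback transports directions back along the move.
Moves compose like the morphisms of c.\<close>

definition is_move :: "('k,'f) poly \<Rightarrow> 'k \<times> ('f \<Rightarrow> 'j) \<Rightarrow> 'k \<Rightarrow> ('f \<Rightarrow> 'f \<times> 'e) \<Rightarrow> bool" where
  "is_move s x J \<beta> \<longleftrightarrow> J \<in> ppos s \<and> (\<forall>a\<in>pdir s J. \<beta> a \<in> pdir (tri s c) x)"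

definition advance :: "('k,'f) poly \<Rightarrow> 'k \<times> ('f \<Rightarrow> 'j) \<Rightarrow> 'k \<Rightarrow> ('f \<Rightarrow> 'f \<times> 'e) \<Rightarrow> 'k \<times> ('f \<Rightarrow> 'j)" where
  "advance s x J \<beta> = (J, restrict (\<lambda>a. cod (snd x (fst (\<beta> a))) (snd (\<beta> a))) (pdir s J))"

definition pullback :: "'k \<times> ('f \<Rightarrow> 'j) \<Rightarrow> ('f \<Rightarrow> 'f \<times> 'e) \<Rightarrow> 'f \<times> 'e \<Rightarrow> 'f \<times> 'e" where
  "pullback x \<beta> b = (fst (\<beta> (fst b)), seq (snd x (fst (\<beta> (fst b)))) (snd (\<beta> (fst b))) (snd b))"

definition unit_move :: "'k \<times> ('f \<Rightarrow> 'j) \<Rightarrow> 'f \<Rightarrow> 'f \<times> 'e" where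
  "unit_move x a = (a, ident (snd x a))"

lemma decoration_mem: "x \<in> ppos (tri s c) \<Longrightarrow> b \<in> pdir (tri s c) x \<Longrightarrow> snd x (fst b) \<in> ppos c"
  by (auto simp: ppos_tri_iff pdir_tri_iff)

lemma advance_mem:
  assumes x: "x \<in> ppos (tri s c)" and mv: "is_move s x J \<beta>"
  shows "advance s x J \<beta> \<in> ppos (tri s c)"
  using mv decoration_mem[OF x] by (auto simp: advance_def is_move_def pdir_tri_iff intro!: cod_mem)

lemma pullback_mem:
  assumes x: "x \<in> ppos (tri s c)" and mv: "is_move s x J \<beta>"
    and b: "b \<in> pdir (tri s c) (advance s x J \<beta>)"
  shows "pullback x \<beta> b \<in> pdir (tri s c) x"
  using mv b decoration_mem[OF x]
  by (auto simp: advance_def is_move_def pullback_def pdir_tri_iff intro!: seq_mem)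

lemma is_move_pullback:
  assumes x: "x \<in> ppos (tri s c)" and mv: "is_move s x J \<beta>"
    and mv': "is_move s (advance s x J \<beta>) J' \<beta>'"
  shows "is_move s x J' (pullback x \<beta> \<circ> \<beta>')"
  using mv' pullback_mem[OF x mv] by (simp add: is_move_def)

lemma is_move_unit: "x \<in> ppos (tri s c) \<Longrightarrow> is_move s x (fst x) (unit_move x)"
  by (auto simp: is_move_def unit_move_def ppos_tri_iff pdir_tri_iff intro!: ident_mem)

lemma advance_unit:
  assumes x: "x \<in> ppos (tri s c)"
  shows "advance s x (fst x) (unit_move x) = x"
proof -
  obtain I f where x_eq: "x = (I, f)" by fastforce
  have f: "f \<in> PiE (pdir s I) (\<lambda>_. ppos c)" using x by (simp add: x_eq)
  then have "restrict (\<lambda>a. cod (f a) (ident (f a))) (pdir s I) = restrict f (pdir s I)"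
    by (intro restrict_ext) (auto intro!: cod_ident)
  then show ?thesis using f by (simp add: x_eq advance_def unit_move_def)
qed

lemma pullback_unit_left:
  assumes x: "x \<in> ppos (tri s c)" and b: "b \<in> pdir (tri s c) x"
  shows "pullback x (unit_move x) b = b"
  using b decoration_mem[OF x b] by (simp add: pullback_def unit_move_def pdir_tri_iff seq_ident_left)

lemma pullback_unit_right:
  assumes x: "x \<in> ppos (tri s c)" and mv: "is_move s x J \<beta>" and a: "a \<in> pdir s J"
  shows "pullback x \<beta> (unit_move (advance s x J \<beta>) a) = \<beta> a"
proof -
  have "\<beta> a \<in> pdir (tri s c) x" using mv a by (simp add: is_move_def)
  then show ?thesis
    using a decoration_mem[OF x] by (simp add: pullback_def unit_move_def advance_def pdir_tri_iff seq_ident_right)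
qed

lemma advance_advance:
  assumes x: "x \<in> ppos (tri s c)" and mv: "is_move s x J \<beta>"
    and mv': "is_move s (advance s x J \<beta>) J' \<beta>'"
  shows "advance s (advance s x J \<beta>) J' \<beta>' = advance s x J' (pullback x \<beta> \<circ> \<beta>')"
proof -
  have "cod (snd (advance s x J \<beta>) (fst (\<beta>' a))) (snd (\<beta>' a))
      = cod (snd x (fst (pullback x \<beta> (\<beta>' a)))) (snd (pullback x \<beta> (\<beta>' a)))"
    if a: "a \<in> pdir s J'" for a
  proof -
    have b': "\<beta>' a \<in> pdir (tri s c) (advance s x J \<beta>)" using mv' a by (simp add: is_move_def)
    then have "fst (\<beta>' a) \<in> pdir s J" by (simp add: advance_def pdir_tri_iff)
    then have b: "\<beta> (fst (\<beta>' a)) \<in> pdir (tri s c) x"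
      using mv by (simp add: is_move_def)
    show ?thesis
      using b b' decoration_mem[OF x b] by (auto simp: advance_def pullback_def pdir_tri_iff cod_seq)
  qed
  then show ?thesis by (simp add: advance_def cong: restrict_cong)
qed

lemma pullback_pullback:
  assumes x: "x \<in> ppos (tri s c)" and mv: "is_move s x J \<beta>"
    and mv': "is_move s (advance s x J \<beta>) J' \<beta>'"
    and b: "b \<in> pdir (tri s c) (advance s (advance s x J \<beta>) J' \<beta>')"
  shows "pullback x \<beta> (pullback (advance s x J \<beta>) \<beta>' b) = pullback x (pullback x \<beta> \<circ> \<beta>') b"
proof -
  have "fst b \<in> pdir s J'" using b by (simp add: advance_def pdir_tri_iff)
  then have b': "\<beta>' (fst b) \<in> pdir (tri s c) (advance s x J \<beta>)"
    using mv' by (simp add: is_move_def)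
  then have "fst (\<beta>' (fst b)) \<in> pdir s J" by (simp add: advance_def pdir_tri_iff)
  then have b'': "\<beta> (fst (\<beta>' (fst b))) \<in> pdir (tri s c) x"
    using mv by (simp add: is_move_def)
  show ?thesis
    using b b' b'' decoration_mem[OF x b'']
    by (auto simp: advance_def pullback_def pdir_tri_iff seq_assoc)
qed

lemma advance_cong: "(\<And>a. a \<in> pdir s J \<Longrightarrow> \<beta> a = \<beta>' a) \<Longrightarrow> advance s x J \<beta> = advance s x J \<beta>'"
  by (simp add: advance_def cong: restrict_cong)

lemma pullback_cong: "\<beta> (fst b) = \<beta>' (fst b) \<Longrightarrow> pullback x \<beta> b = pullback x \<beta>' b"
  by (simp add: pullback_def)

end

section \<open>Morphisms into the cofree comonoid\<close>

locale cofree_hom = poly_comonoid c eps delta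
  for c :: "('j,'e) poly" and eps :: "('j \<Rightarrow> unit) \<times> ('j \<Rightarrow> unit \<Rightarrow> 'e)"
    and delta :: "('j \<Rightarrow> 'j \<times> ('e \<Rightarrow> 'j)) \<times> ('j \<Rightarrow> 'e \<times> 'e \<Rightarrow> 'e)" +
  fixes p :: "('i,'d) poly" and s :: "('k,'f) poly"
    and Psi :: "('k \<times> ('f \<Rightarrow> 'j) \<Rightarrow> ('d list \<Rightarrow> 'i) \<times> ('d list \<Rightarrow> 'k))
      \<times> ('k \<times> ('f \<Rightarrow> 'j) \<Rightarrow> 'd list \<times> 'f \<Rightarrow> 'f \<times> 'e)"
  assumes is_hom_Psi: "is_hom (tri s c) (tri (cofree p) s) Psi"
begin

definition tree :: "'k \<times> ('f \<Rightarrow> 'j) \<Rightarrow> 'd list \<Rightarrow> 'i" where "tree x = fst (fst Psi x)"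
definition label :: "'k \<times> ('f \<Rightarrow> 'j) \<Rightarrow> 'd list \<Rightarrow> 'k" where "label x = snd (fst Psi x)"
definition backward :: "'k \<times> ('f \<Rightarrow> 'j) \<Rightarrow> 'd list \<Rightarrow> 'f \<Rightarrow> 'f \<times> 'e" where
  "backward x ds a = snd Psi x (ds, a)"
definition shift :: "'k \<times> ('f \<Rightarrow> 'j) \<Rightarrow> 'd list \<Rightarrow> 'k \<times> ('f \<Rightarrow> 'j)" where
  "shift x ds = advance s x (label x ds) (backward x ds)"

definition counit_law :: bool where
  "counit_law \<longleftrightarrow> (\<forall>x\<in>ppos (tri s c).
     label x [] = fst x \<and> (\<forall>a\<in>pdir s (fst x). backward x [] a = unit_move x a))"

definition comult_law :: bool where
  "comult_law \<longleftrightarrow> (\<forall>x\<in>ppos (tri s c). \<forall>ds\<in>tpaths p (tree x).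
     tree (shift x ds) = subtree (tree x) ds \<and>
     (\<forall>es\<in>tpaths p (subtree (tree x) ds). label (shift x ds) es = label x (ds @ es) \<and>
        (\<forall>a\<in>pdir s (label x (ds @ es)).
           backward x (ds @ es) a = pullback x (backward x ds) (backward (shift x ds) es a))))"

lemma Psi_fst: "fst Psi x = (tree x, label x)"
  by (simp add: tree_def label_def)

lemma Psi_snd: "snd Psi x (ds, a) = backward x ds a"
  by (simp add: backward_def)

context
  fixes x assumes x: "x \<in> ppos (tri s c)"
begin

lemma tree_mem: "tree x \<in> ppos (cofree p)"
  and label_PiE: "label x \<in> PiE (tpaths p (tree x)) (\<lambda>_. ppos s)"
  using is_hom_pos[OF is_hom_Psi x] by (simp_all add: Psi_fst)

lemma Psi_fst_mem: "(tree x, label x) \<in> ppos (tri (cofree p) s)"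
  using tree_mem label_PiE by simp

lemma label_mem: "ds \<in> tpaths p (tree x) \<Longrightarrow> label x ds \<in> ppos s"
  using label_PiE by auto

lemma tree_undefined: "ds \<notin> tpaths p (tree x) \<Longrightarrow> tree x ds = undefined"
  using tree_mem by (simp add: mem_ppos_cofree)

lemma backward_mem:
  "ds \<in> tpaths p (tree x) \<Longrightarrow> a \<in> pdir s (label x ds) \<Longrightarrow> backward x ds a \<in> pdir (tri s c) x"
  using is_hom_dir[OF is_hom_Psi x, of "(ds, a)"] by (simp add: Psi_fst backward_def)

lemma is_move_backward: "ds \<in> tpaths p (tree x) \<Longrightarrow> is_move s x (label x ds) (backward x ds)"
  by (simp add: is_move_def label_mem backward_mem)

lemma shift_mem: "ds \<in> tpaths p (tree x) \<Longrightarrow> shift x ds \<in> ppos (tri s c)"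
  unfolding shift_def using x by (rule advance_mem) (rule is_move_backward)

end

abbreviation "cp \<equiv> cofree p"

abbreviation "counit_lhs \<equiv> comp_hom (tri s c) s (lunit_inv s)
  (comp_hom (tri s c) (tri ypoly s) (tri_hom cp s ypoly s (cofree_eps p) (id_hom s)) Psi)"
abbreviation "counit_rhs \<equiv> comp_hom (tri s c) s (runit_inv s) (tri_hom s c s ypoly (id_hom s) eps)"

text \<open>The right-hand side of the comultiplication law, built up factor by factor; each
abbreviation is named after its codomain.\<close>

abbreviation "to_s_cc \<equiv> tri_hom s c s (tri c c) (id_hom s) delta"
abbreviation "to_sc_c \<equiv> comp_hom (tri s c) (tri (tri s c) c) (assoc s c c) to_s_cc"
abbreviation "to_cps_c \<equiv>
  comp_hom (tri s c) (tri (tri cp s) c) (tri_hom (tri s c) c (tri cp s) c Psi (id_hom c)) to_sc_c"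
abbreviation "to_cp_sc \<equiv> comp_hom (tri s c) (tri cp (tri s c)) (assoc_inv cp s c) to_cps_c"
abbreviation "to_cp_cps \<equiv>
  comp_hom (tri s c) (tri cp (tri cp s)) (tri_hom cp (tri s c) cp (tri cp s) (id_hom cp) Psi) to_cp_sc"
abbreviation "comult_rhs \<equiv> comp_hom (tri s c) (tri (tri cp cp) s) (assoc cp cp s) to_cp_cps"
abbreviation "comult_lhs \<equiv>
  comp_hom (tri s c) (tri (tri cp cp) s) (tri_hom cp s (tri cp cp) s (cofree_delta p) (id_hom s)) Psi"

lemma is_hom_counit_lhs: "is_hom (tri s c) s counit_lhs"
  by (rule is_hom_comp_hom[OF is_hom_comp_hom[OF is_hom_Psi is_hom_tri_hom[OF is_hom_cofree_eps is_hom_id_hom]]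
        is_hom_lunit_inv])

lemma is_hom_counit_rhs: "is_hom (tri s c) s counit_rhs"
  by (rule is_hom_comp_hom[OF is_hom_tri_hom[OF is_hom_id_hom is_hom_eps] is_hom_runit_inv])

lemma is_hom_to_s_cc: "is_hom (tri s c) (tri s (tri c c)) to_s_cc"
  by (rule is_hom_tri_hom[OF is_hom_id_hom is_hom_delta])

lemma is_hom_to_sc_c: "is_hom (tri s c) (tri (tri s c) c) to_sc_c"
  by (rule is_hom_comp_hom[OF is_hom_to_s_cc is_hom_assoc])

lemma is_hom_to_cps_c: "is_hom (tri s c) (tri (tri cp s) c) to_cps_c"
  by (rule is_hom_comp_hom[OF is_hom_to_sc_c is_hom_tri_hom[OF is_hom_Psi is_hom_id_hom]])

lemma is_hom_to_cp_sc: "is_hom (tri s c) (tri cp (tri s c)) to_cp_sc"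
  by (rule is_hom_comp_hom[OF is_hom_to_cps_c is_hom_assoc_inv])

lemma is_hom_to_cp_cps: "is_hom (tri s c) (tri cp (tri cp s)) to_cp_cps"
  by (rule is_hom_comp_hom[OF is_hom_to_cp_sc is_hom_tri_hom[OF is_hom_id_hom is_hom_Psi]])

lemma is_hom_comult_rhs: "is_hom (tri s c) (tri (tri cp cp) s) comult_rhs"
  by (rule is_hom_comp_hom[OF is_hom_to_cp_cps is_hom_assoc])

lemma is_hom_comult_lhs: "is_hom (tri s c) (tri (tri cp cp) s) comult_lhs"
  by (rule is_hom_comp_hom[OF is_hom_Psi is_hom_tri_hom[OF is_hom_cofree_delta is_hom_id_hom]])

context
  fixes x I f
  assumes x_eq: "x = (I, f)" and x: "x \<in> ppos (tri s c)"
begin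

lemma I_mem: "I \<in> ppos s" and f_PiE: "f \<in> PiE (pdir s I) (\<lambda>_. ppos c)"
  using x by (auto simp: x_eq)

lemma fst_x: "fst x = I" and snd_x: "snd x = f"
  by (simp_all add: x_eq)

lemma f_mem: "a \<in> pdir s I \<Longrightarrow> f a \<in> ppos c"
  using f_PiE by auto

lemma counit_lhs:
  shows counit_lhs_fst: "fst counit_lhs x = label x []"
    and counit_lhs_snd: "\<And>a. a \<in> pdir s (label x []) \<Longrightarrow> snd counit_lhs x a = backward x [] a"
proof -
  let ?U = "tri_hom cp s ypoly s (cofree_eps p) (id_hom s)"
  have label0: "label x [] \<in> ppos s" using label_mem[OF x] by simp
  have U_fst: "fst ?U (tree x, label x) = ((), restrict (\<lambda>_. label x []) {()})"
    using Psi_fst_mem[OF x] tree_mem[OF x] label0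
    by (simp add: tri_hom_fst cofree_eps_fst cofree_eps_snd id_hom_fst del: mem_ppos_tri)
  have U_mem: "fst ?U (tree x, label x) \<in> ppos (tri ypoly s)"
    using is_hom_pos[OF is_hom_tri_hom[OF is_hom_cofree_eps is_hom_id_hom] Psi_fst_mem[OF x]] .
  show fst_eq: "fst counit_lhs x = label x []"
    using x U_mem U_fst by (simp add: comp_hom_fst Psi_fst lunit_inv_fst del: mem_ppos_tri)
  fix a assume a: "a \<in> pdir s (label x [])"
  have "snd counit_lhs x a = snd Psi x (snd ?U (tree x, label x) ((), a))"
    using x a fst_eq U_mem U_fst
    by (simp add: comp_hom_fst comp_hom_snd Psi_fst lunit_inv_snd del: mem_ppos_tri)
  also have "snd ?U (tree x, label x) ((), a) = ([], a)"
    using Psi_fst_mem[OF x] tree_mem[OF x] a label0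
    by (subst tri_hom_snd) (simp_all add: cofree_eps_fst cofree_eps_snd id_hom_fst id_hom_snd del: mem_ppos_tri)
  finally show "snd counit_lhs x a = backward x [] a" by (simp add: backward_def)
qed

lemma counit_rhs:
  shows counit_rhs_fst: "fst counit_rhs x = I"
    and counit_rhs_snd: "\<And>a. a \<in> pdir s I \<Longrightarrow> snd counit_rhs x a = unit_move x a"
proof -
  let ?V = "tri_hom s c s ypoly (id_hom s) eps"
  have V_fst: "fst ?V x = (I, restrict (\<lambda>_. ()) (pdir s I))"
    using x I_mem by (simp add: x_eq tri_hom_fst id_hom_fst id_hom_snd del: mem_ppos_tri cong: restrict_cong)
  have V_mem: "fst ?V x \<in> ppos (tri s ypoly)"
    using is_hom_pos[OF is_hom_tri_hom[OF is_hom_id_hom is_hom_eps] x] .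
  show fst_eq: "fst counit_rhs x = I"
    using x V_mem V_fst by (simp add: comp_hom_fst runit_inv_fst del: mem_ppos_tri)
  fix a assume a: "a \<in> pdir s I"
  have "snd counit_rhs x a = snd ?V x (a, ())"
    using x a fst_eq V_mem V_fst by (simp add: comp_hom_fst comp_hom_snd runit_inv_snd del: mem_ppos_tri)
  also have "\<dots> = unit_move x a"
    using x a I_mem f_PiE unfolding x_eq
    by (subst tri_hom_snd) (auto simp: id_hom_fst id_hom_snd ident_def unit_move_def simp del: mem_ppos_tri)
  finally show "snd counit_rhs x a = unit_move x a" .
qed

lemma counit_eq_at_iff:
  "(fst counit_lhs x = fst counit_rhs x \<and> (\<forall>a\<in>pdir s (fst counit_lhs x). snd counit_lhs x a = snd counit_rhs x a))
   \<longleftrightarrow> (label x [] = fst x \<and> (\<forall>a\<in>pdir s (fst x). backward x [] a = unit_move x a))"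
  by (auto simp: counit_lhs_fst counit_lhs_snd counit_rhs_fst counit_rhs_snd fst_x)

lemma to_s_cc_fst: "fst to_s_cc x = (I, restrict (\<lambda>a. (f a, cod (f a))) (pdir s I))"
  using x I_mem f_mem
  by (simp add: x_eq tri_hom_fst id_hom_fst id_hom_snd delta_fst del: mem_ppos_tri cong: restrict_cong)

lemma to_sc_c_fst: "fst to_sc_c x = (x, restrict (\<lambda>b. cod (f (fst b)) (snd b)) (pdir (tri s c) x))"
proof -
  have m: "fst to_s_cc x \<in> ppos (tri s (tri c c))" by (rule is_hom_pos[OF is_hom_to_s_cc x])
  have rf: "restrict (\<lambda>d. fst (restrict (\<lambda>a. (f a, cod (f a))) (pdir s I) d)) (pdir s I) = f"
    using f_PiE by (simp add: PiE_restrict cong: restrict_cong)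
  have "fst to_sc_c x = fst (assoc s c c) (fst to_s_cc x)" using x by (simp add: comp_hom_fst)
  also have "\<dots> = ((I, f), restrict (\<lambda>b. snd (restrict (\<lambda>a. (f a, cod (f a))) (pdir s I) (fst b)) (snd b))
      (pdir (tri s c) (I, f)))"
    unfolding to_s_cc_fst by (subst assoc_fst[OF m[unfolded to_s_cc_fst]]) (simp only: rf)
  also have "\<dots> = (x, restrict (\<lambda>b. cod (f (fst b)) (snd b)) (pdir (tri s c) x))"
    by (auto simp: x_eq pdir_tri intro!: restrict_ext)
  finally show ?thesis .
qed

lemma to_cps_c_fst:
  "fst to_cps_c x = ((tree x, label x),
     restrict (\<lambda>z. cod (f (fst (snd Psi x z))) (snd (snd Psi x z))) (pdir (tri cp s) (tree x, label x)))"
proof -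
  have m: "fst to_sc_c x \<in> ppos (tri (tri s c) c)" by (rule is_hom_pos[OF is_hom_to_sc_c x])
  have "fst to_cps_c x = fst (tri_hom (tri s c) c (tri cp s) c Psi (id_hom c)) (fst to_sc_c x)"
    using x by (simp add: comp_hom_fst)
  also have "\<dots> = ((tree x, label x), restrict (\<lambda>z. fst (id_hom c)
      (restrict (\<lambda>b. cod (f (fst b)) (snd b)) (pdir (tri s c) x) (snd Psi x z))) (pdir (tri cp s) (tree x, label x)))"
    using m unfolding to_sc_c_fst by (subst tri_hom_fst) (simp_all add: Psi_fst)
  also have "\<dots> = ((tree x, label x),
      restrict (\<lambda>z. cod (f (fst (snd Psi x z))) (snd (snd Psi x z))) (pdir (tri cp s) (tree x, label x)))"
  proof (intro arg_cong[where f="\<lambda>z. ((tree x, label x), z)"] restrict_ext)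
    fix z assume "z \<in> pdir (tri cp s) (tree x, label x)"
    then have b: "snd Psi x z \<in> pdir (tri s c) x"
      using is_hom_dir[OF is_hom_Psi x, of z] by (simp add: Psi_fst)
    then show "fst (id_hom c) (restrict (\<lambda>b. cod (f (fst b)) (snd b)) (pdir (tri s c) x) (snd Psi x z))
      = cod (f (fst (snd Psi x z))) (snd (snd Psi x z))"
      by (simp add: id_hom_fst cod_mem f_mem x_eq pdir_tri_iff)
  qed
  finally show ?thesis .
qed

lemma to_cp_sc_fst: "fst to_cp_sc x = (tree x, restrict (shift x) (tpaths p (tree x)))"
proof -
  have m: "fst to_cps_c x \<in> ppos (tri (tri cp s) c)" by (rule is_hom_pos[OF is_hom_to_cps_c x])
  have "fst to_cp_sc x = fst (assoc_inv cp s c) (fst to_cps_c x)" using x by (simp add: comp_hom_fst)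
  also have "\<dots> = (tree x, restrict (\<lambda>ds. (label x ds, restrict (\<lambda>a.
      restrict (\<lambda>z. cod (f (fst (snd Psi x z))) (snd (snd Psi x z))) (pdir (tri cp s) (tree x, label x)) (ds, a))
      (pdir s (label x ds)))) (tpaths p (tree x)))"
    using m unfolding to_cps_c_fst by (subst assoc_inv_fst) simp_all
  also have "\<dots> = (tree x, restrict (shift x) (tpaths p (tree x)))"
    by (intro arg_cong[where f="\<lambda>z. (tree x, z)"] restrict_ext)
       (auto simp: shift_def advance_def backward_def x_eq intro!: restrict_ext)
  finally show ?thesis .
qed

lemma to_cp_cps_fst: "fst to_cp_cps x = (tree x, restrict (\<lambda>ds. fst Psi (shift x ds)) (tpaths p (tree x)))"
proof -
  have m: "fst to_cp_sc x \<in> ppos (tri cp (tri s c))" by (rule is_hom_pos[OF is_hom_to_cp_sc x])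
  have "fst to_cp_cps x = fst (tri_hom cp (tri s c) cp (tri cp s) (id_hom cp) Psi) (fst to_cp_sc x)"
    using x by (simp add: comp_hom_fst)
  also have "\<dots> = (tree x, restrict (\<lambda>ds. fst Psi (restrict (shift x) (tpaths p (tree x))
      (snd (id_hom cp) (tree x) ds))) (pdir cp (fst (id_hom cp) (tree x))))"
    using m unfolding to_cp_sc_fst by (subst tri_hom_fst) (simp_all add: id_hom_fst tree_mem[OF x])
  also have "\<dots> = (tree x, restrict (\<lambda>ds. fst Psi (shift x ds)) (tpaths p (tree x)))"
    using tree_mem[OF x] by (auto simp: id_hom_fst id_hom_snd intro!: restrict_ext)
  finally show ?thesis .
qed

lemma comult_rhs_fst:
  "fst comult_rhs x = ((tree x, restrict (\<lambda>ds. tree (shift x ds)) (tpaths p (tree x))),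
     restrict (\<lambda>z. label (shift x (fst z)) (snd z))
       (pdir (tri cp cp) (tree x, restrict (\<lambda>ds. tree (shift x ds)) (tpaths p (tree x)))))"
proof -
  have m: "fst to_cp_cps x \<in> ppos (tri cp (tri cp s))" by (rule is_hom_pos[OF is_hom_to_cp_cps x])
  have r: "restrict (\<lambda>d. fst (restrict (\<lambda>ds. fst Psi (shift x ds)) (tpaths p (tree x)) d)) (tpaths p (tree x))
     = restrict (\<lambda>ds. tree (shift x ds)) (tpaths p (tree x))"
    by (auto simp: Psi_fst intro!: restrict_ext)
  have "fst comult_rhs x = fst (assoc cp cp s) (fst to_cp_cps x)" using x by (simp add: comp_hom_fst)
  also have "\<dots> = ((tree x, restrict (\<lambda>ds. tree (shift x ds)) (tpaths p (tree x))),
     restrict (\<lambda>z. snd (restrict (\<lambda>ds. fst Psi (shift x ds)) (tpaths p (tree x)) (fst z)) (snd z))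
       (pdir (tri cp cp) (tree x, restrict (\<lambda>ds. tree (shift x ds)) (tpaths p (tree x)))))"
    unfolding to_cp_cps_fst by (subst assoc_fst[OF m[unfolded to_cp_cps_fst]]) (simp only: r pdir_cofree)
  also have "\<dots> = ((tree x, restrict (\<lambda>ds. tree (shift x ds)) (tpaths p (tree x))),
     restrict (\<lambda>z. label (shift x (fst z)) (snd z))
       (pdir (tri cp cp) (tree x, restrict (\<lambda>ds. tree (shift x ds)) (tpaths p (tree x)))))"
    by (intro arg_cong[where f="\<lambda>z. ((tree x, restrict (\<lambda>ds. tree (shift x ds)) (tpaths p (tree x))), z)"]
        restrict_ext) (auto simp: pdir_tri Psi_fst)
  finally show ?thesis .
qed

lemma comult_lhs_fst:
  "fst comult_lhs x = ((tree x, restrict (subtree (tree x)) (tpaths p (tree x))),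
     restrict (\<lambda>z. label x (fst z @ snd z)) (pdir (tri cp cp) (tree x, restrict (subtree (tree x)) (tpaths p (tree x)))))"
proof -
  let ?D = "tri_hom cp s (tri cp cp) s (cofree_delta p) (id_hom s)"
  have "fst comult_lhs x = fst ?D (tree x, label x)" using x by (simp add: comp_hom_fst Psi_fst)
  also have "\<dots> = ((tree x, restrict (subtree (tree x)) (tpaths p (tree x))),
     restrict (\<lambda>z. fst (id_hom s) (label x (snd (cofree_delta p) (tree x) z)))
       (pdir (tri cp cp) (tree x, restrict (subtree (tree x)) (tpaths p (tree x)))))"
    using Psi_fst_mem[OF x] tree_mem[OF x] by (subst tri_hom_fst) (simp_all add: cofree_delta_fst del: mem_ppos_tri)
  also have "\<dots> = ((tree x, restrict (subtree (tree x)) (tpaths p (tree x))),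
     restrict (\<lambda>z. label x (fst z @ snd z)) (pdir (tri cp cp) (tree x, restrict (subtree (tree x)) (tpaths p (tree x)))))"
  proof (intro arg_cong[where f="\<lambda>z. ((tree x, restrict (subtree (tree x)) (tpaths p (tree x))), z)"] restrict_ext)
    fix z assume z: "z \<in> pdir (tri cp cp) (tree x, restrict (subtree (tree x)) (tpaths p (tree x)))"
    obtain ds es where z_eq: "z = (ds, es)" by fastforce
    have ds: "ds \<in> tpaths p (tree x)" and es: "es \<in> tpaths p (subtree (tree x) ds)" using z by (auto simp: z_eq)
    then have "ds @ es \<in> tpaths p (tree x)" by (simp add: tpaths_append)
    then show "fst (id_hom s) (label x (snd (cofree_delta p) (tree x) z)) = label x (fst z @ snd z)"
      using tree_mem[OF x] ds es by (simp add: z_eq cofree_delta_snd id_hom_fst label_mem[OF x])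
  qed
  finally show ?thesis .
qed

lemma to_sc_c_snd:
  assumes ae: "(a0, e1) \<in> pdir (tri s c) x" and e2: "e2 \<in> pdir c (cod (f a0) e1)"
  shows "snd to_sc_c x ((a0, e1), e2) = (a0, seq (f a0) e1 e2)"
proof -
  have a0: "a0 \<in> pdir s I" and e1: "e1 \<in> pdir c (f a0)" using ae by (simp_all add: x_eq)
  have "((a0, e1), e2) \<in> pdir (tri (tri s c) c) (fst (assoc s c c) (fst to_s_cc x))"
    using to_sc_c_fst ae e2 x by (simp add: comp_hom_fst del: mem_pdir_tri) (simp add: x_eq)
  moreover have "snd (assoc s c c) (fst to_s_cc x) ((a0, e1), e2) = (a0, (e1, e2))"
    using is_hom_pos[OF is_hom_to_s_cc x] calculation
    unfolding to_s_cc_fst by (subst assoc_snd) simp_all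
  ultimately have "snd to_sc_c x ((a0, e1), e2) = snd to_s_cc x (a0, (e1, e2))"
    and "(a0, (e1, e2)) \<in> pdir (tri s (tri c c)) (fst to_s_cc x)"
    using comp_hom_snd_step[OF is_hom_to_s_cc is_hom_assoc x] by simp_all
  then show ?thesis
    using x unfolding x_eq by (subst (asm) tri_hom_snd') (simp_all add: id_hom_snd I_mem a0 seq_def)
qed

lemma to_cp_sc_snd:
  assumes ds: "ds \<in> tpaths p (tree x)" and b: "b \<in> pdir (tri s c) (shift x ds)"
  shows "snd to_cp_sc x (ds, b) = pullback x (backward x ds) b"
proof -
  obtain a1 e2 where b_eq: "b = (a1, e2)" by fastforce
  obtain a0 e1 where back_eq: "backward x ds a1 = (a0, e1)" by fastforce
  have a1: "a1 \<in> pdir s (label x ds)" and e2: "e2 \<in> pdir c (cod (f a0) e1)"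
    using b by (auto simp: b_eq shift_def advance_def back_eq snd_x)
  have ae: "(a0, e1) \<in> pdir (tri s c) x" using backward_mem[OF x ds a1] by (simp add: back_eq)
  then have cod_e1: "cod (f a0) e1 \<in> ppos c" by (simp add: x_eq cod_mem f_mem)
  have "fst (assoc_inv cp s c) (fst to_cps_c x) = (tree x, restrict (shift x) (tpaths p (tree x)))"
    using to_cp_sc_fst x by (simp add: comp_hom_fst)
  then have "(ds, (a1, e2)) \<in> pdir (tri cp (tri s c)) (fst (assoc_inv cp s c) (fst to_cps_c x))"
    using ds b by (simp add: b_eq)
  moreover have "snd (assoc_inv cp s c) (fst to_cps_c x) (ds, (a1, e2)) = ((ds, a1), e2)"
    using is_hom_pos[OF is_hom_to_cps_c x] calculation
    unfolding to_cps_c_fst by (subst assoc_inv_snd) simp_all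
  ultimately have s4: "snd to_cp_sc x (ds, b) = snd to_cps_c x ((ds, a1), e2)"
    and e3: "((ds, a1), e2) \<in> pdir (tri (tri cp s) c) (fst to_cps_c x)"
    using comp_hom_snd_step[OF is_hom_to_cps_c is_hom_assoc_inv x] by (simp_all add: b_eq)
  have "((ds, a1), e2) \<in> pdir (tri (tri cp s) c)
      (fst (tri_hom (tri s c) c (tri cp s) c Psi (id_hom c)) (fst to_sc_c x))"
    using e3 x by (simp add: comp_hom_fst)
  moreover have "snd (tri_hom (tri s c) c (tri cp s) c Psi (id_hom c)) (fst to_sc_c x) ((ds, a1), e2)
      = ((a0, e1), e2)"
    using is_hom_pos[OF is_hom_to_sc_c x] calculation ae e2 cod_e1
    unfolding to_sc_c_fst
    by (subst tri_hom_snd') (simp_all add: id_hom_snd back_eq[unfolded backward_def] snd_x)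
  ultimately have "snd to_cps_c x ((ds, a1), e2) = snd to_sc_c x ((a0, e1), e2)"
    using comp_hom_snd_step[OF is_hom_to_sc_c is_hom_tri_hom[OF is_hom_Psi is_hom_id_hom] x] by simp
  then show ?thesis
    using s4 to_sc_c_snd[OF ae e2] by (simp add: b_eq pullback_def back_eq snd_x)
qed

lemma comult_rhs_snd:
  assumes ds: "ds \<in> tpaths p (tree x)" and es: "es \<in> tpaths p (tree (shift x ds))"
    and a: "a \<in> pdir s (label (shift x ds) es)"
  shows "snd comult_rhs x ((ds, es), a) = pullback x (backward x ds) (backward (shift x ds) es a)"
proof -
  let ?P = "tri_hom cp (tri s c) cp (tri cp s) (id_hom cp) Psi"
  have "fst (assoc cp cp s) (fst to_cp_cps x) = fst comult_rhs x" using x by (simp add: comp_hom_fst)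
  then have "((ds, es), a) \<in> pdir (tri (tri cp cp) s) (fst (assoc cp cp s) (fst to_cp_cps x))"
    using ds es a by (simp add: comult_rhs_fst)
  moreover have "snd (assoc cp cp s) (fst to_cp_cps x) ((ds, es), a) = (ds, (es, a))"
    using is_hom_pos[OF is_hom_to_cp_cps x] calculation
    unfolding to_cp_cps_fst by (subst assoc_snd) simp_all
  ultimately have s6: "snd comult_rhs x ((ds, es), a) = snd to_cp_cps x (ds, (es, a))"
    and e5: "(ds, (es, a)) \<in> pdir (tri cp (tri cp s)) (fst to_cp_cps x)"
    using comp_hom_snd_step[OF is_hom_to_cp_cps is_hom_assoc x] by simp_all
  have "(ds, (es, a)) \<in> pdir (tri cp (tri cp s)) (fst ?P (fst to_cp_sc x))"
    using e5 x by (simp add: comp_hom_fst)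
  moreover have "snd ?P (fst to_cp_sc x) (ds, (es, a)) = (ds, backward (shift x ds) es a)"
    using is_hom_pos[OF is_hom_to_cp_sc x] calculation tree_mem[OF x] ds
    unfolding to_cp_sc_fst by (subst tri_hom_snd') (simp_all add: id_hom_fst id_hom_snd Psi_snd)
  ultimately have s5: "snd to_cp_cps x (ds, (es, a)) = snd to_cp_sc x (ds, backward (shift x ds) es a)"
    using comp_hom_snd_step[OF is_hom_to_cp_sc is_hom_tri_hom[OF is_hom_id_hom is_hom_Psi] x] by simp
  show ?thesis
    unfolding s6 s5 using to_cp_sc_snd[OF ds backward_mem[OF shift_mem[OF x ds] es a]] .
qed

lemma comult_lhs_snd:
  assumes ds: "ds \<in> tpaths p (tree x)" and es: "es \<in> tpaths p (subtree (tree x) ds)"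
    and a: "a \<in> pdir s (label x (ds @ es))"
  shows "snd comult_lhs x ((ds, es), a) = backward x (ds @ es) a"
proof -
  let ?D = "tri_hom cp s (tri cp cp) s (cofree_delta p) (id_hom s)"
  have "((ds, es), a) \<in> pdir (tri (tri cp cp) s) (fst ?D (tree x, label x))"
    using ds es a comult_lhs_fst x by (simp add: comp_hom_fst Psi_fst)
  moreover have "snd ?D (tree x, label x) ((ds, es), a) = (ds @ es, a)"
    using Psi_fst_mem[OF x] calculation tree_mem[OF x] ds es a label_mem[OF x, of "ds @ es"]
    by (subst tri_hom_snd') (simp_all add: cofree_delta_snd id_hom_snd tpaths_append del: mem_ppos_tri)
  ultimately show ?thesis
    using comp_hom_snd_step[OF is_hom_Psi is_hom_tri_hom[OF is_hom_cofree_delta is_hom_id_hom] x]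
    by (simp add: Psi_fst Psi_snd)
qed

lemma comult_fst_eq_iff:
  "fst comult_lhs x = fst comult_rhs x \<longleftrightarrow>
    (\<forall>ds\<in>tpaths p (tree x). tree (shift x ds) = subtree (tree x) ds \<and>
       (\<forall>es\<in>tpaths p (subtree (tree x) ds). label (shift x ds) es = label x (ds @ es)))"
proof -
  let ?L = "restrict (subtree (tree x)) (tpaths p (tree x))"
  let ?R = "restrict (\<lambda>ds. tree (shift x ds)) (tpaths p (tree x))"
  have trees: "?L = ?R \<longleftrightarrow> (\<forall>ds\<in>tpaths p (tree x). tree (shift x ds) = subtree (tree x) ds)"
    unfolding restrict_eq_iff by auto
  have labels: "restrict (\<lambda>z. label x (fst z @ snd z)) (pdir (tri cp cp) (tree x, ?L)) =
      restrict (\<lambda>z. label (shift x (fst z)) (snd z)) (pdir (tri cp cp) (tree x, ?L)) \<longleftrightarrow>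
    (\<forall>ds\<in>tpaths p (tree x). \<forall>es\<in>tpaths p (subtree (tree x) ds). label (shift x ds) es = label x (ds @ es))"
    unfolding restrict_eq_iff pdir_tri by auto
  have "fst comult_lhs x = fst comult_rhs x \<longleftrightarrow> ?L = ?R \<and>
      restrict (\<lambda>z. label x (fst z @ snd z)) (pdir (tri cp cp) (tree x, ?L)) =
      restrict (\<lambda>z. label (shift x (fst z)) (snd z)) (pdir (tri cp cp) (tree x, ?L))"
    unfolding comult_lhs_fst comult_rhs_fst by auto
  then show ?thesis unfolding trees labels by blast
qed

lemma comult_eq_at_iff:
  "(fst comult_lhs x = fst comult_rhs x \<and>
     (\<forall>e\<in>pdir (tri (tri cp cp) s) (fst comult_lhs x). snd comult_lhs x e = snd comult_rhs x e)) \<longleftrightarrow>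
   (\<forall>ds\<in>tpaths p (tree x). tree (shift x ds) = subtree (tree x) ds \<and>
     (\<forall>es\<in>tpaths p (subtree (tree x) ds). label (shift x ds) es = label x (ds @ es) \<and>
       (\<forall>a\<in>pdir s (label x (ds @ es)).
          backward x (ds @ es) a = pullback x (backward x ds) (backward (shift x ds) es a))))"
  (is "?L \<longleftrightarrow> ?R")
proof
  assume L: ?L
  then have pos: "\<forall>ds\<in>tpaths p (tree x). tree (shift x ds) = subtree (tree x) ds \<and>
       (\<forall>es\<in>tpaths p (subtree (tree x) ds). label (shift x ds) es = label x (ds @ es))"
    using comult_fst_eq_iff by blast
  show ?R
  proof (intro ballI conjI)
    fix ds es a
    assume ds: "ds \<in> tpaths p (tree x)" and es: "es \<in> tpaths p (subtree (tree x) ds)"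
      and a: "a \<in> pdir s (label x (ds @ es))"
    have "((ds, es), a) \<in> pdir (tri (tri cp cp) s) (fst comult_lhs x)"
      using ds es a by (simp add: comult_lhs_fst)
    then show "backward x (ds @ es) a = pullback x (backward x ds) (backward (shift x ds) es a)"
      using L pos ds es a comult_lhs_snd[OF ds es a] comult_rhs_snd[OF ds] by auto
  qed (use pos in blast)+
next
  assume R: ?R
  then have pos: "fst comult_lhs x = fst comult_rhs x" using comult_fst_eq_iff by blast
  show ?L
  proof (intro conjI ballI pos)
    fix e assume e: "e \<in> pdir (tri (tri cp cp) s) (fst comult_lhs x)"
    obtain ds es a where e_eq: "e = ((ds, es), a)" by (rule prod_cases_left3)
    have ds: "ds \<in> tpaths p (tree x)" and es: "es \<in> tpaths p (subtree (tree x) ds)"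
      and a: "a \<in> pdir s (label x (ds @ es))"
      using e by (auto simp: comult_lhs_fst e_eq)
    show "snd comult_lhs x e = snd comult_rhs x e"
      using comult_lhs_snd[OF ds es a] comult_rhs_snd[OF ds] R ds es a by (simp add: e_eq)
  qed
qed

end

lemma counit_law_iff: "counit_lhs = counit_rhs \<longleftrightarrow> counit_law"
  unfolding hom_eq_iff[OF is_hom_counit_lhs is_hom_counit_rhs] counit_law_def
  by (rule ball_cong[OF refl]) (rule counit_eq_at_iff[OF surjective_pairing])

lemma comult_law_iff: "comult_lhs = comult_rhs \<longleftrightarrow> comult_law"
  unfolding hom_eq_iff[OF is_hom_comult_lhs is_hom_comult_rhs] comult_law_def
  by (rule ball_cong[OF refl]) (rule comult_eq_at_iff[OF surjective_pairing])

theorem handler_iff: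
  "handler (cofree p) (cofree_eps p) (cofree_delta p) c eps delta s Psi \<longleftrightarrow> counit_law \<and> comult_law"
  unfolding handler_def using is_hom_Psi counit_law_iff comult_law_iff by simp

abbreviation "proj \<equiv> comp_hom (tri s c) (tri p s) (tri_hom (cofree p) s p s (cofree_proj p) (id_hom s)) Psi"

lemma is_hom_proj: "is_hom (tri s c) (tri p s) proj"
  by (rule is_hom_comp_hom[OF is_hom_Psi is_hom_tri_hom[OF is_hom_cofree_proj is_hom_id_hom]])

lemma proj_fst:
  assumes x: "x \<in> ppos (tri s c)"
  shows "fst proj x = (tree x [], restrict (\<lambda>d. label x [d]) (pdir p (tree x [])))"
proof -
  have "fst proj x = fst (tri_hom (cofree p) s p s (cofree_proj p) (id_hom s)) (tree x, label x)"
    using x by (simp add: comp_hom_fst Psi_fst)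
  also have "\<dots> = (tree x [],
      restrict (\<lambda>d. fst (id_hom s) (label x (snd (cofree_proj p) (tree x) d))) (pdir p (tree x [])))"
    using Psi_fst_mem[OF x] tree_mem[OF x]
    by (subst tri_hom_fst) (simp_all add: cofree_proj_fst del: mem_ppos_tri)
  also have "\<dots> = (tree x [], restrict (\<lambda>d. label x [d]) (pdir p (tree x [])))"
    using tree_mem[OF x] by (auto intro!: restrict_ext simp: cofree_proj_snd id_hom_fst label_mem[OF x])
  finally show ?thesis .
qed

lemma proj_snd:
  assumes x: "x \<in> ppos (tri s c)" and d: "d \<in> pdir p (tree x [])" and a: "a \<in> pdir s (label x [d])"
  shows "snd proj x (d, a) = backward x [d] a"
proof -
  let ?F = "tri_hom (cofree p) s p s (cofree_proj p) (id_hom s)"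
  have "(d, a) \<in> pdir (tri p s) (fst ?F (tree x, label x))"
    using d a proj_fst[OF x] x by (simp add: comp_hom_fst Psi_fst)
  moreover have "snd ?F (tree x, label x) (d, a) = ([d], a)"
    using Psi_fst_mem[OF x] calculation tree_mem[OF x] d a label_mem[OF x, of "[d]"]
    by (subst tri_hom_snd') (simp_all add: cofree_proj_snd id_hom_snd del: mem_ppos_tri)
  ultimately show ?thesis
    using comp_hom_snd_step[OF is_hom_Psi is_hom_tri_hom[OF is_hom_cofree_proj is_hom_id_hom] x]
    by (simp add: Psi_fst Psi_snd)
qed

end

section \<open>Extending an elementary handler\<close>

locale elementary_hom = poly_comonoid c eps delta
  for c :: "('j,'e) poly" and eps :: "('j \<Rightarrow> unit) \<times> ('j \<Rightarrow> unit \<Rightarrow> 'e)"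
    and delta :: "('j \<Rightarrow> 'j \<times> ('e \<Rightarrow> 'j)) \<times> ('j \<Rightarrow> 'e \<times> 'e \<Rightarrow> 'e)" +
  fixes p :: "('i,'d) poly" and s :: "('k,'f) poly"
    and phi :: "('k \<times> ('f \<Rightarrow> 'j) \<Rightarrow> 'i \<times> ('d \<Rightarrow> 'k)) \<times> ('k \<times> ('f \<Rightarrow> 'j) \<Rightarrow> 'd \<times> 'f \<Rightarrow> 'f \<times> 'e)"
  assumes is_hom_phi: "is_hom (tri s c) (tri p s) phi"
begin

definition root :: "'k \<times> ('f \<Rightarrow> 'j) \<Rightarrow> 'i" where "root x = fst (fst phi x)"
definition child :: "'k \<times> ('f \<Rightarrow> 'j) \<Rightarrow> 'd \<Rightarrow> 'k" where "child x = snd (fst phi x)"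
definition step_back :: "'k \<times> ('f \<Rightarrow> 'j) \<Rightarrow> 'd \<Rightarrow> 'f \<Rightarrow> 'f \<times> 'e" where
  "step_back x d a = snd phi x (d, a)"
definition step :: "'k \<times> ('f \<Rightarrow> 'j) \<Rightarrow> 'd \<Rightarrow> 'k \<times> ('f \<Rightarrow> 'j)" where
  "step x d = advance s x (child x d) (step_back x d)"

text \<open>ext_tree and ext_label are undefined off the valid paths, as the extensional encoding of
the positions of c_p requires.\<close>

primrec run :: "'k \<times> ('f \<Rightarrow> 'j) \<Rightarrow> 'd list \<Rightarrow> 'k \<times> ('f \<Rightarrow> 'j)" where
  "run x [] = x"
| "run x (d # ds) = run (step x d) ds"

primrec valid :: "'k \<times> ('f \<Rightarrow> 'j) \<Rightarrow> 'd list \<Rightarrow> bool" where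
  "valid x [] = True"
| "valid x (d # ds) \<longleftrightarrow> d \<in> pdir p (root x) \<and> valid (step x d) ds"

primrec path_back :: "'k \<times> ('f \<Rightarrow> 'j) \<Rightarrow> 'd list \<Rightarrow> 'f \<Rightarrow> 'f \<times> 'e" where
  "path_back x [] a = unit_move x a"
| "path_back x (d # ds) a = pullback x (step_back x d) (path_back (step x d) ds a)"

definition ext_tree :: "'k \<times> ('f \<Rightarrow> 'j) \<Rightarrow> 'd list \<Rightarrow> 'i" where
  "ext_tree x ds = (if valid x ds then root (run x ds) else undefined)"

definition ext_label :: "'k \<times> ('f \<Rightarrow> 'j) \<Rightarrow> 'd list \<Rightarrow> 'k" where
  "ext_label x ds = (if valid x ds then fst (run x ds) else undefined)"

definition extend :: "('k \<times> ('f \<Rightarrow> 'j) \<Rightarrow> ('d list \<Rightarrow> 'i) \<times> ('d list \<Rightarrow> 'k))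
    \<times> ('k \<times> ('f \<Rightarrow> 'j) \<Rightarrow> 'd list \<times> 'f \<Rightarrow> 'f \<times> 'e)" where
  "extend = restrict_hom (tri s c) (tri (cofree p) s)
     (\<lambda>x. (ext_tree x, ext_label x), \<lambda>x (ds, a). path_back x ds a)"

lemma phi_fst: "fst phi x = (root x, child x)"
  by (simp add: root_def child_def)

lemma root_mem: "x \<in> ppos (tri s c) \<Longrightarrow> root x \<in> ppos p"
  and child_PiE: "x \<in> ppos (tri s c) \<Longrightarrow> child x \<in> PiE (pdir p (root x)) (\<lambda>_. ppos s)"
  using is_hom_pos[OF is_hom_phi, of x] by (simp_all add: phi_fst)

lemma is_move_step_back:
  assumes x: "x \<in> ppos (tri s c)" and d: "d \<in> pdir p (root x)"
  shows "is_move s x (child x d) (step_back x d)"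
  using child_PiE[OF x] d is_hom_dir[OF is_hom_phi x, of "(d, _)"]
  by (auto simp: is_move_def phi_fst step_back_def)

lemma step_mem: "x \<in> ppos (tri s c) \<Longrightarrow> d \<in> pdir p (root x) \<Longrightarrow> step x d \<in> ppos (tri s c)"
  unfolding step_def by (simp add: advance_mem is_move_step_back)

lemma run_mem: "x \<in> ppos (tri s c) \<Longrightarrow> valid x ds \<Longrightarrow> run x ds \<in> ppos (tri s c)"
  by (induction ds arbitrary: x) (auto simp: step_mem)

lemma valid_append: "valid x (ds @ es) \<longleftrightarrow> valid x ds \<and> valid (run x ds) es"
  by (induction ds arbitrary: x) auto

lemma run_append: "run x (ds @ es) = run (run x ds) es"
  by (induction ds arbitrary: x) auto

lemma subtree_ext_tree: "valid x ds \<Longrightarrow> subtree (ext_tree x) ds = ext_tree (run x ds)"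
  by (simp add: ext_tree_def subtree_def fun_eq_iff valid_append run_append)

lemma ext_label_append: "valid x ds \<Longrightarrow> ext_label x (ds @ es) = ext_label (run x ds) es"
  by (simp add: ext_label_def valid_append run_append)

lemma ext_tree_Nil: "ext_tree x [] = root x"
  by (simp add: ext_tree_def)

lemma ext_tree_Cons: "d \<in> pdir p (root x) \<Longrightarrow> ext_tree x (d # ds) = ext_tree (step x d) ds"
  by (simp add: ext_tree_def)

lemma tpaths_ext_tree: "ds \<in> tpaths p (ext_tree x) \<longleftrightarrow> valid x ds"
proof (induction ds arbitrary: x)
  case (Cons d ds)
  note root = ext_tree_Nil
  show ?case
  proof (cases "d \<in> pdir p (root x)")
    case True
    then have "subtree (ext_tree x) [d] = ext_tree (step x d)" using subtree_ext_tree[of x "[d]"] by simp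
    then show ?thesis using True Cons.IH by (simp add: root)
  qed (simp add: root)
qed simp

lemma ext_tree_mem: "x \<in> ppos (tri s c) \<Longrightarrow> ext_tree x \<in> ppos (cofree p)"
  unfolding mem_ppos_cofree using run_mem root_mem by (auto simp: ext_tree_def tpaths_ext_tree)

lemma ext_label_PiE:
  assumes x: "x \<in> ppos (tri s c)"
  shows "ext_label x \<in> PiE (tpaths p (ext_tree x)) (\<lambda>_. ppos s)"
proof -
  have "fst (run x ds) \<in> ppos s" if "valid x ds" for ds
    using run_mem[OF x that] by (simp add: ppos_tri_iff)
  then show ?thesis by (auto simp: ext_label_def PiE_def extensional_def tpaths_ext_tree)
qed

lemma path_back_Nil_fun: "path_back x [] = unit_move x"
  by (simp add: fun_eq_iff)

lemma path_back_Cons_fun: "path_back x (d # ds) = pullback x (step_back x d) \<circ> path_back (step x d) ds"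
  by (simp add: fun_eq_iff)

lemma ext_label_Nil: "ext_label x [] = fst x"
  by (simp add: ext_label_def)

lemma ext_label_Cons: "d \<in> pdir p (root x) \<Longrightarrow> ext_label x (d # ds) = ext_label (step x d) ds"
  by (simp add: ext_label_def)

lemma is_move_path_back: "x \<in> ppos (tri s c) \<Longrightarrow> valid x ds \<Longrightarrow> is_move s x (ext_label x ds) (path_back x ds)"
proof (induction ds arbitrary: x)
  case Nil
  then show ?case by (simp add: ext_label_Nil path_back_Nil_fun is_move_unit)
next
  case (Cons d ds)
  then have d: "d \<in> pdir p (root x)" and "valid (step x d) ds" by simp_all
  with Cons.IH step_mem[OF Cons.prems(1) d]
  have "is_move s (step x d) (ext_label (step x d) ds) (path_back (step x d) ds)" by blast
  then show ?case
    unfolding ext_label_Cons[OF d] path_back_Cons_fun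
    by (rule is_move_pullback[OF Cons.prems(1) is_move_step_back[OF Cons.prems(1) d], folded step_def])
qed

lemma run_eq_advance:
  "x \<in> ppos (tri s c) \<Longrightarrow> valid x ds \<Longrightarrow> run x ds = advance s x (ext_label x ds) (path_back x ds)"
proof (induction ds arbitrary: x)
  case Nil
  then show ?case by (simp add: ext_label_Nil path_back_Nil_fun advance_unit)
next
  case (Cons d ds)
  then have d: "d \<in> pdir p (root x)" and v: "valid (step x d) ds" by simp_all
  have "run x (d # ds) = advance s (step x d) (ext_label (step x d) ds) (path_back (step x d) ds)"
    using Cons.IH[OF step_mem[OF Cons.prems(1) d] v] by simp
  also have "\<dots> = advance s x (ext_label x (d # ds)) (path_back x (d # ds))"
    using advance_advance[OF Cons.prems(1) is_move_step_back[OF Cons.prems(1) d]]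
      is_move_path_back[OF step_mem[OF Cons.prems(1) d] v]
    by (simp add: ext_label_Cons[OF d] path_back_Cons_fun step_def)
  finally show ?case .
qed

lemma path_back_append:
  "x \<in> ppos (tri s c) \<Longrightarrow> valid x ds \<Longrightarrow> valid (run x ds) es \<Longrightarrow> a \<in> pdir s (ext_label (run x ds) es) \<Longrightarrow>
   path_back x (ds @ es) a = pullback x (path_back x ds) (path_back (run x ds) es a)"
proof (induction ds arbitrary: x)
  case Nil
  then have "path_back x es a \<in> pdir (tri s c) x"
    using is_move_path_back[OF Nil.prems(1)] by (simp add: is_move_def)
  then show ?case using Nil.prems(1) by (simp add: path_back_Nil_fun pullback_unit_left)
next
  case (Cons d ds)
  let ?y = "step x d"
  have x: "x \<in> ppos (tri s c)" and d: "d \<in> pdir p (root x)" and v: "valid ?y ds"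
    using Cons.prems by simp_all
  have y: "?y \<in> ppos (tri s c)" by (rule step_mem[OF x d])
  have ves: "valid (run ?y ds) es" and a: "a \<in> pdir s (ext_label (run ?y ds) es)"
    using Cons.prems by simp_all
  have b: "path_back (run ?y ds) es a \<in> pdir (tri s c) (run ?y ds)"
    using is_move_path_back[OF run_mem[OF y v] ves] a by (simp add: is_move_def)
  have "path_back x ((d # ds) @ es) a =
      pullback x (step_back x d) (pullback ?y (path_back ?y ds) (path_back (run ?y ds) es a))"
    using Cons.IH[OF y v ves a] by simp
  also have "\<dots> = pullback x (path_back x (d # ds)) (path_back (run x (d # ds)) es a)"
    using pullback_pullback[OF x is_move_step_back[OF x d], folded step_def, OF is_move_path_back[OF y v]]
      b run_eq_advance[OF y v]
    by (simp add: path_back_Cons_fun)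
  finally show ?case .
qed

lemma is_hom_extend: "is_hom (tri s c) (tri (cofree p) s) extend"
  unfolding extend_def
proof (rule is_hom_restrict_hom, goal_cases)
  case (1 x)
  then show ?case using ext_tree_mem ext_label_PiE by simp
next
  case (2 x e)
  then show ?case
    using is_move_path_back[OF 2(1)] by (cases e) (auto simp: tpaths_ext_tree is_move_def)
qed

lemma extend_fst: "x \<in> ppos (tri s c) \<Longrightarrow> fst extend x = (ext_tree x, ext_label x)"
  by (simp add: extend_def fst_restrict_hom)

lemma extend_snd:
  "x \<in> ppos (tri s c) \<Longrightarrow> valid x ds \<Longrightarrow> a \<in> pdir s (ext_label x ds) \<Longrightarrow>
   snd extend x (ds, a) = path_back x ds a"
  by (simp add: extend_def restrict_hom_def tpaths_ext_tree)

end

sublocale elementary_hom \<subseteq> ext: cofree_hom c eps delta p s extend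
  by unfold_locales (rule is_hom_extend)

context elementary_hom
begin

lemma ext_tree_eq: "x \<in> ppos (tri s c) \<Longrightarrow> ext.tree x = ext_tree x"
  and ext_label_eq: "x \<in> ppos (tri s c) \<Longrightarrow> ext.label x = ext_label x"
  by (simp_all add: ext.tree_def ext.label_def extend_fst)

lemma ext_backward_eq:
  "x \<in> ppos (tri s c) \<Longrightarrow> valid x ds \<Longrightarrow> a \<in> pdir s (ext_label x ds) \<Longrightarrow>
   ext.backward x ds a = path_back x ds a"
  by (simp add: ext.backward_def extend_snd)

lemma ext_shift_eq: "x \<in> ppos (tri s c) \<Longrightarrow> valid x ds \<Longrightarrow> ext.shift x ds = run x ds"
  unfolding ext.shift_def run_eq_advance ext_label_eq by (rule advance_cong) (simp add: ext_backward_eq)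

lemma extend_counit_law: ext.counit_law
  unfolding ext.counit_law_def
  by (simp add: ext_label_eq ext_backward_eq ext_label_Nil)

lemma extend_comult_law: ext.comult_law
  unfolding ext.comult_law_def
proof (intro ballI conjI)
  fix x ds assume x: "x \<in> ppos (tri s c)" and ds: "ds \<in> tpaths p (ext.tree x)"
  have v: "valid x ds" using ds by (simp add: ext_tree_eq[OF x] tpaths_ext_tree)
  have y: "run x ds \<in> ppos (tri s c)" by (rule run_mem[OF x v])
  show "ext.tree (ext.shift x ds) = subtree (ext.tree x) ds"
    by (simp add: ext_shift_eq[OF x v] ext_tree_eq[OF x] ext_tree_eq[OF y] subtree_ext_tree[OF v])
  fix es assume es: "es \<in> tpaths p (subtree (ext.tree x) ds)"
  have ves: "valid (run x ds) es"
    using es by (simp add: ext_tree_eq[OF x] subtree_ext_tree[OF v] tpaths_ext_tree)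
  show "ext.label (ext.shift x ds) es = ext.label x (ds @ es)"
    by (simp add: ext_shift_eq[OF x v] ext_label_eq[OF x] ext_label_eq[OF y] ext_label_append[OF v])
  fix a assume a: "a \<in> pdir s (ext.label x (ds @ es))"
  then have a': "a \<in> pdir s (ext_label (run x ds) es)"
    by (simp add: ext_label_eq[OF x] ext_label_append[OF v])
  have vv: "valid x (ds @ es)" using v ves by (simp add: valid_append)
  have fst_mem: "fst (path_back (run x ds) es a) \<in> pdir s (ext_label x ds)"
    using is_move_path_back[OF y ves] a' run_eq_advance[OF x v]
    by (simp add: is_move_def advance_def pdir_tri_iff)
  have "ext.backward x (ds @ es) a = path_back x (ds @ es) a"
    using a vv by (simp add: ext_label_eq[OF x] ext_backward_eq[OF x])
  also have "\<dots> = pullback x (path_back x ds) (path_back (run x ds) es a)"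
    by (rule path_back_append[OF x v ves a'])
  also have "\<dots> = pullback x (ext.backward x ds) (path_back (run x ds) es a)"
    using fst_mem by (intro pullback_cong) (simp add: ext_backward_eq[OF x v])
  also have "path_back (run x ds) es a = ext.backward (ext.shift x ds) es a"
    using a' by (simp add: ext_shift_eq[OF x v] ext_backward_eq[OF y ves])
  finally show "ext.backward x (ds @ es) a = pullback x (ext.backward x ds) (ext.backward (ext.shift x ds) es a)" .
qed

lemma extend_handler: "handler (cofree p) (cofree_eps p) (cofree_delta p) c eps delta s extend"
  using ext.handler_iff extend_counit_law extend_comult_law by simp

lemma proj_extend: "ext.proj = phi"
proof (rule hom_eqI[OF ext.is_hom_proj is_hom_phi])
  fix x assume x: "x \<in> ppos (tri s c)"
  have "restrict (\<lambda>d. ext_label x [d]) (pdir p (root x)) = restrict (child x) (pdir p (root x))"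
    by (rule restrict_ext) (simp add: ext_label_def step_def advance_def)
  also have "\<dots> = child x" using child_PiE[OF x] by simp
  finally show "fst ext.proj x = fst phi x"
    by (simp add: ext.proj_fst[OF x] ext_tree_eq[OF x] ext_label_eq[OF x] ext_tree_def phi_fst)
next
  fix x e assume x: "x \<in> ppos (tri s c)" and e: "e \<in> pdir (tri p s) (fst ext.proj x)"
  obtain d a where e_eq: "e = (d, a)" by fastforce
  have d: "d \<in> pdir p (root x)" and a: "a \<in> pdir s (child x d)"
    using e by (auto simp: e_eq ext.proj_fst[OF x] ext_tree_eq[OF x] ext_label_eq[OF x] ext_tree_def
        ext_label_def step_def advance_def)
  have "snd ext.proj x e = path_back x [d] a"
    using ext.proj_snd[OF x, of d a] d a ext_backward_eq[OF x, of "[d]" a]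
    by (simp add: e_eq ext_tree_eq[OF x] ext_label_eq[OF x] ext_tree_def ext_label_def step_def advance_def)
  also have "\<dots> = step_back x d a"
    using pullback_unit_right[OF x is_move_step_back[OF x d] a] by (simp add: step_def)
  finally show "snd ext.proj x e = snd phi x e" by (simp add: e_eq step_back_def)
qed

end

section \<open>Handlers are determined by their elementary part\<close>

text \<open>The comultiplication law along a one-step path [d] is a recursion for the trees, labels
and backward maps of a handler; the extension of its elementary part satisfies the same
recursion.\<close>

locale cofree_handler = cofree_hom +
  assumes counit: counit_law and comult: comult_law

sublocale cofree_handler \<subseteq> E: elementary_hom c eps delta p s proj
  by unfold_locales (rule is_hom_proj)

context cofree_handler
begin

context
  fixes x assumes x: "x \<in> ppos (tri s c)"
begin

lemma root_proj: "E.root x = tree x []"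
  using proj_fst[OF x] by (simp add: E.root_def)

lemma step_proj:
  assumes d: "d \<in> pdir p (tree x [])"
  shows "E.step x d = shift x [d]"
proof -
  have "E.child x d = label x [d]" using proj_fst[OF x] d by (simp add: E.child_def)
  moreover have "E.step_back x d a = backward x [d] a" if "a \<in> pdir s (label x [d])" for a
    using proj_snd[OF x d that] by (simp add: E.step_back_def)
  ultimately show ?thesis unfolding E.step_def shift_def by (auto intro: advance_cong)
qed

lemma comult_one_step:
  assumes d: "d \<in> pdir p (tree x [])"
  shows "tree (shift x [d]) = subtree (tree x) [d]"
    and "es \<in> tpaths p (tree (shift x [d])) \<Longrightarrow> label (shift x [d]) es = label x (d # es)"
    and "es \<in> tpaths p (tree (shift x [d])) \<Longrightarrow> a \<in> pdir s (label x (d # es)) \<Longrightarrow>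
      backward x (d # es) a = pullback x (backward x [d]) (backward (shift x [d]) es a)"
  using comult x d unfolding comult_law_def
  by (metis append_Cons append_Nil tpaths_Cons tpaths_Nil)+

end

lemma ext_tree_proj: "x \<in> ppos (tri s c) \<Longrightarrow> E.ext_tree x ds = tree x ds"
proof (induction ds arbitrary: x)
  case Nil
  then show ?case by (simp add: E.ext_tree_Nil root_proj)
next
  case (Cons d ds)
  show ?case
  proof (cases "d \<in> pdir p (tree x [])")
    case True
    then show ?thesis
      using Cons.IH[OF shift_mem[OF Cons.prems]] comult_one_step(1)[OF Cons.prems True] root_proj[OF Cons.prems]
      by (simp add: E.ext_tree_Cons step_proj[OF Cons.prems] subtree_def)
  next
    case False
    then show ?thesis
      using tree_undefined[OF Cons.prems] root_proj[OF Cons.prems] by (simp add: E.ext_tree_def)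
  qed
qed

lemma ext_label_proj:
  "x \<in> ppos (tri s c) \<Longrightarrow> ds \<in> tpaths p (tree x) \<Longrightarrow>
   E.ext_label x ds = label x ds \<and> (\<forall>a\<in>pdir s (label x ds). E.path_back x ds a = backward x ds a)"
proof (induction ds arbitrary: x)
  case Nil
  then show ?case using counit by (simp add: counit_law_def E.ext_label_Nil)
next
  case (Cons d ds)
  let ?y = "shift x [d]"
  have x: "x \<in> ppos (tri s c)" and d: "d \<in> pdir p (tree x [])"
    and ds: "ds \<in> tpaths p (tree ?y)"
    using Cons.prems comult_one_step(1) by simp_all
  have y: "?y \<in> ppos (tri s c)" using shift_mem[OF x] d by simp
  have IH: "E.ext_label ?y ds = label ?y ds"
    "\<And>a. a \<in> pdir s (label ?y ds) \<Longrightarrow> E.path_back ?y ds a = backward ?y ds a"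
    using Cons.IH[OF y ds] by auto
  have E_d: "d \<in> pdir p (E.root x)" using d root_proj[OF x] by simp
  show ?case
  proof (intro conjI ballI)
    show "E.ext_label x (d # ds) = label x (d # ds)"
      using IH(1) comult_one_step(2)[OF x d ds] by (simp add: E.ext_label_Cons[OF E_d] step_proj[OF x d])
    fix a assume a: "a \<in> pdir s (label x (d # ds))"
    have "fst (backward ?y ds a) \<in> pdir s (label x [d])"
      using backward_mem[OF y ds] a comult_one_step(2)[OF x d ds]
      by (simp add: shift_def advance_def pdir_tri_iff)
    then have "pullback x (E.step_back x d) (backward ?y ds a) = pullback x (backward x [d]) (backward ?y ds a)"
      using proj_snd[OF x d] by (intro pullback_cong) (simp add: E.step_back_def)
    then show "E.path_back x (d # ds) a = backward x (d # ds) a"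
      using IH(2) a comult_one_step(2,3)[OF x d ds] by (simp add: step_proj[OF x d])
  qed
qed

theorem extend_proj: "E.extend = Psi"
proof -
  have tree_eq: "E.ext_tree x = tree x" if "x \<in> ppos (tri s c)" for x
    using ext_tree_proj[OF that] by (simp add: fun_eq_iff)
  have label_eq: "E.ext_label x = label x" if x: "x \<in> ppos (tri s c)" for x
    using E.ext_label_PiE[OF x] label_PiE[OF x] ext_label_proj[OF x] tree_eq[OF x] by (auto intro: PiE_ext)
  show ?thesis
  proof (rule hom_eqI[OF E.is_hom_extend is_hom_Psi])
    fix x assume "x \<in> ppos (tri s c)"
    then show "fst E.extend x = fst Psi x" by (simp add: E.extend_fst tree_eq label_eq Psi_fst)
  next
    fix x e assume x: "x \<in> ppos (tri s c)" and e: "e \<in> pdir (tri (cofree p) s) (fst E.extend x)"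
    obtain ds a where e_eq: "e = (ds, a)" by fastforce
    have ds: "ds \<in> tpaths p (tree x)" and a: "a \<in> pdir s (label x ds)"
      using e by (simp_all add: e_eq E.extend_fst[OF x] tree_eq[OF x] label_eq[OF x])
    then show "snd E.extend x e = snd Psi x e"
      using ext_label_proj[OF x ds] E.extend_snd[OF x] E.tpaths_ext_tree[of ds x]
      by (simp add: e_eq Psi_snd tree_eq[OF x] label_eq[OF x])
  qed
qed

end

lemma cofree_handlerI:
  assumes "comonoid c eps delta" and "handler (cofree p) (cofree_eps p) (cofree_delta p) c eps delta s \<Psi>"
  shows "cofree_handler c eps delta p s \<Psi>"
proof -
  have hom: "cofree_hom c eps delta p s \<Psi>"
    using assms by (simp add: cofree_hom_def cofree_hom_axioms_def poly_comonoid_def handler_def)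
  show ?thesis
    using hom cofree_hom.handler_iff[OF hom] assms(2) by (simp add: cofree_handler_def cofree_handler_axioms_def)
qed

lemma elementary_homI:
  "comonoid c eps delta \<Longrightarrow> is_hom (tri s c) (tri p s) \<phi> \<Longrightarrow> elementary_hom c eps delta p s \<phi>"
  by (simp add: elementary_hom_def elementary_hom_axioms_def poly_comonoid_def)

theorem mainTheorem12:
  fixes p :: "('i,'d) poly" and c :: "('j,'e) poly" and s :: "('k,'f) poly"
    and eps :: "('j \<Rightarrow> unit) \<times> ('j \<Rightarrow> unit \<Rightarrow> 'e)"
    and delta :: "('j \<Rightarrow> 'j \<times> ('e \<Rightarrow> 'j)) \<times> ('j \<Rightarrow> 'e \<times> 'e \<Rightarrow> 'e)"
  assumes "comonoid c eps delta"
  shows "bij_betw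
           (\<lambda>\<Psi>. comp_hom (tri s c) (tri p s)
                   (tri_hom (cofree p) s p s (cofree_proj p) (id_hom s)) \<Psi>)
           {\<Psi>. handler (cofree p) (cofree_eps p) (cofree_delta p) c eps delta s \<Psi>}
           {\<phi>. is_hom (tri s c) (tri p s) \<phi>}"
proof (rule bij_betw_byWitness[where f' = "elementary_hom.extend c eps delta p s"];
    intro ballI image_subsetI; simp only: mem_Collect_eq)
  fix \<Psi> assume "handler (cofree p) (cofree_eps p) (cofree_delta p) c eps delta s \<Psi>"
  then interpret cofree_handler c eps delta p s \<Psi> using assms by (simp add: cofree_handlerI)
  show "elementary_hom.extend c eps delta p s proj = \<Psi>" by (rule extend_proj)
  show "is_hom (tri s c) (tri p s) proj" by (rule is_hom_proj)
next
  fix \<phi> assume "is_hom (tri s c) (tri p s) \<phi>"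
  then interpret elementary_hom c eps delta p s \<phi> using assms by (simp add: elementary_homI)
  show "ext.proj = \<phi>" by (rule proj_extend)
  show "handler (cofree p) (cofree_eps p) (cofree_delta p) c eps delta s extend" by (rule extend_handler)
qed

end
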